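(* Let $W$ be a weak $V$-module and $z$ a nonzero complex number. For all $u,v\in V$, $Y^L_{P(z)}(u,x_1)Y^R_{P(z)}(v,x_2)=Y^R_{P(z)}(v,x_2)Y^L_{P(z)}(u,x_1)$ as operators on $\mathcal D_{P(z)}(W)$.
   Context: $V$ is a vertex operator algebra with vacuum $\mathbf 1$, Virasoro element $\omega$, $Y(\omega,x)=\sum_{n}L(n)x^{-n-2}$, and $V=\coprod_{n\in\mathbb Z}V_{(n)}$ graded by $L(0)$-eigenvalues. The formal delta function is $\delta(x)=\sum_{n\in\mathbb Z}x^n$; binomial expressions $(x_1-x_2)^n$ are expanded in nonnegative powers of the second variable. A weak $V$-module is a vector space $W$ with a linear map $Y_W:V\to(\mathrm{End}\,W)[[x,x^{-1}]]$ such that $Y_W(v,x)w\in W((x))$, $Y_W(\mathbf 1,x)=\mathrm{id}_W$, and the Jacobi identity $x_0^{-1}\delta(\frac{x_1-x_2}{x_0})Y_W(u,x_1)Y_W(v,x_2)-x_0^{-1}\delta(\frac{x_2-x_1}{-x_0})Y_W(v,x_2)Y_W(u,x_1)=x_2^{-1}\delta(\frac{x_1-x_0}{x_2})Y_W(Y(u,x_0)v,x_2)$ holds. For $v\in V$ set $Y^o(v,x)=Y_W(e^{xL(1)}(-x^{-2})^{L(0)}v,x^{-1})$; then $Y^o(v,x)w\in W((x^{-1}))$. For a nonzero complex number $z$, $\alpha\in W^*$ is a $P(z)$-linear functional if for all $v\in V,w\in W$ the series $\langle\alpha,Y^o(v,x)w\rangle$ converges absolutely in $|x|>|z|$ to a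 rational function in $\mathbb C[x,x^{-1},(x-z)^{-1}]$, and for each fixed $v$ the orders of the poles at $0$ and at $z$ of these rational functions are bounded independently of $w$. $\mathcal D_{P(z)}(W)$ is the space of $P(z)$-linear functionals on $W$. Let $\iota_{x;\infty}$ and $\iota_{x;0}$ be the injective maps from the field $\mathbb C(x)$ of rational functions to Laurent series sending a rational function to its Laurent expansion at $x=\infty$ and at $x=0$, respectively. For $v\in V$, $\alpha\in\mathcal D_{P(z)}(W)$, $w\in W$, let $f_{v,\alpha,w}=\iota_{x;\infty}^{-1}\langle\alpha,Y^o(v,x)w\rangle$; define $Y^R_{P(z)}(v,x)\alpha,\ Y^L_{P(z)}(v,x)\alpha\in W^*[[x,x^{-1}]]$ by $\langle Y^R_{P(z)}(v,x)\alpha,w\rangle=\iota_{x;0}f_{v,\alpha,w}(x)$ and $\langle Y^L_{P(z)}(v,x)\alpha,w\rangle=\iota_{x;0}\big(f_{v,\alpha,w}(x+z)\big)$. Both $Y^R_{P(z)}(v,x)$ and $Y^L_{P(z)}(v,x)$ map $\mathcal D_{P(z)}(W)$ into $\mathcal D_{P(z)}(W)((x))$. *)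

theory Defs
  imports "HOL-Analysis.Analysis" "HOL-Library.Groups_Big_Fun"
          "HOL-Computational_Algebra.Polynomial"
begin

(* A complex vector space is a type 'a::ab_group_add together with a scalar
   multiplication s :: complex => 'a => 'a satisfying vector_space s.
   A vertex operator Y(u,x) = sum_n u_n x^(-n-1) is encoded by its modes:
   Y u n w = u_n w. *)

text \<open>Component form (coefficient of x0^(-l-1) x1^(-m-1) x2^(-n-1)) of the
  Jacobi identity for Y (on V) and YW (on W).\<close>
definition jacobi_identity ::
  "(complex \<Rightarrow> 'w::ab_group_add \<Rightarrow> 'w) \<Rightarrow> ('v \<Rightarrow> int \<Rightarrow> 'v \<Rightarrow> 'v)
   \<Rightarrow> ('v \<Rightarrow> int \<Rightarrow> 'w \<Rightarrow> 'w) \<Rightarrow> bool" where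
  "jacobi_identity sW Y YW \<longleftrightarrow>
     (\<forall>u v w (l::int) (m::int) (n::int).
        Sum_any (\<lambda>i::nat. sW ((of_int m :: complex) gchoose i)
                              (YW (Y u (l + int i) v) (m + n - int i) w))
      = Sum_any (\<lambda>i::nat. sW ((-1) ^ i * ((of_int l :: complex) gchoose i))
                  (YW u (l + m - int i) (YW v (n + int i) w)
                   - sW ((-1::complex) powi l) (YW v (l + n - int i) (YW u (m + int i) w)))))"

text \<open>L(n) = omega_(n+1), since Y(omega,x) = sum L(n) x^(-n-2).\<close>
definition Lop :: "('v \<Rightarrow> int \<Rightarrow> 'v \<Rightarrow> 'v) \<Rightarrow> 'v \<Rightarrow> int \<Rightarrow> 'v \<Rightarrow> 'v" where
  "Lop Y om n = Y om (n + 1)"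

definition Vgr :: "(complex \<Rightarrow> 'v::ab_group_add \<Rightarrow> 'v) \<Rightarrow> ('v \<Rightarrow> int \<Rightarrow> 'v \<Rightarrow> 'v)
                   \<Rightarrow> 'v \<Rightarrow> int \<Rightarrow> 'v set" where
  "Vgr sV Y om n = {v. Lop Y om 0 v = sV (of_int n) v}"

definition is_VOA :: "(complex \<Rightarrow> 'v::ab_group_add \<Rightarrow> 'v) \<Rightarrow> ('v \<Rightarrow> int \<Rightarrow> 'v \<Rightarrow> 'v)
                      \<Rightarrow> 'v \<Rightarrow> 'v \<Rightarrow> complex \<Rightarrow> bool" where
  "is_VOA sV Y vac om c \<longleftrightarrow>
     vector_space sV \<and>
     (\<forall>n w. Vector_Spaces.linear sV sV (\<lambda>u. Y u n w)) \<and>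
     (\<forall>u n. Vector_Spaces.linear sV sV (Y u n)) \<and>
     (\<forall>u v. \<exists>N. \<forall>n\<ge>N. Y u n v = 0) \<and>
     (\<forall>n. Y vac n = (if n = -1 then id else (\<lambda>_. 0))) \<and>
     (\<forall>u. Y u (-1) vac = u \<and> (\<forall>n\<ge>0. Y u n vac = 0)) \<and>
     jacobi_identity sV Y Y \<and>
     (\<forall>m n v. Lop Y om m (Lop Y om n v) - Lop Y om n (Lop Y om m v)
              = sV (of_int (m - n)) (Lop Y om (m + n) v)
                + (if m + n = 0 then sV ((of_int m ^ 3 - of_int m) / 12 * c) v else 0)) \<and>
     (\<forall>u n w. Y (Lop Y om (-1) u) n w = sV (- of_int n) (Y u (n - 1) w)) \<and>
     om \<in> Vgr sV Y om 2 \<and>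
     (\<forall>v. \<exists>f. finite {k. f k \<noteq> 0} \<and> (\<forall>k. f k \<in> Vgr sV Y om k) \<and> v = Sum_any f) \<and>
     (\<forall>n. \<exists>B. finite B \<and> Vgr sV Y om n \<subseteq> module.span sV B) \<and>
     (\<exists>N. \<forall>n<N. Vgr sV Y om n = {0})"

definition is_weak_module :: "(complex \<Rightarrow> 'v::ab_group_add \<Rightarrow> 'v) \<Rightarrow> ('v \<Rightarrow> int \<Rightarrow> 'v \<Rightarrow> 'v)
     \<Rightarrow> 'v \<Rightarrow> (complex \<Rightarrow> 'w::ab_group_add \<Rightarrow> 'w) \<Rightarrow> ('v \<Rightarrow> int \<Rightarrow> 'w \<Rightarrow> 'w) \<Rightarrow> bool" where
  "is_weak_module sV Y vac sW YW \<longleftrightarrow>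
     vector_space sW \<and>
     (\<forall>n w. Vector_Spaces.linear sV sW (\<lambda>u. YW u n w)) \<and>
     (\<forall>u n. Vector_Spaces.linear sW sW (YW u n)) \<and>
     (\<forall>u w. \<exists>N. \<forall>n\<ge>N. YW u n w = 0) \<and>
     (\<forall>n. YW vac n = (if n = -1 then id else (\<lambda>_. 0))) \<and>
     jacobi_identity sW Y YW"

definition hproj :: "(complex \<Rightarrow> 'v::ab_group_add \<Rightarrow> 'v) \<Rightarrow> ('v \<Rightarrow> int \<Rightarrow> 'v \<Rightarrow> 'v)
                     \<Rightarrow> 'v \<Rightarrow> int \<Rightarrow> 'v \<Rightarrow> 'v" where
  "hproj sV Y om n v = (THE c. \<exists>f. finite {k. f k \<noteq> 0} \<and> (\<forall>k. f k \<in> Vgr sV Y om k)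
                                   \<and> v = Sum_any f \<and> c = f n)"

text \<open>Coefficient of x^p in Y^o(v,x) w = Y_W(e^(x L(1)) (-x^(-2))^(L(0)) v, x^(-1)) w:
  sum over k, j of (-1)^k/j! (L(1)^j v_(k))_(p-j+2k-1) w.\<close>
definition Yo :: "(complex \<Rightarrow> 'v::ab_group_add \<Rightarrow> 'v) \<Rightarrow> ('v \<Rightarrow> int \<Rightarrow> 'v \<Rightarrow> 'v) \<Rightarrow> 'v
     \<Rightarrow> (complex \<Rightarrow> 'w::ab_group_add \<Rightarrow> 'w) \<Rightarrow> ('v \<Rightarrow> int \<Rightarrow> 'w \<Rightarrow> 'w)
     \<Rightarrow> 'v \<Rightarrow> int \<Rightarrow> 'w \<Rightarrow> 'w" where
  "Yo sV Y om sW YW v p w =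
     Sum_any (\<lambda>(k::int, j::nat). sW ((-1::complex) powi k / of_nat (fact j))
        (YW ((Lop Y om 1 ^^ j) (hproj sV Y om k v)) (p - int j + 2 * k - 1) w))"

definition DPz :: "(complex \<Rightarrow> 'v::ab_group_add \<Rightarrow> 'v) \<Rightarrow> ('v \<Rightarrow> int \<Rightarrow> 'v \<Rightarrow> 'v) \<Rightarrow> 'v
     \<Rightarrow> (complex \<Rightarrow> 'w::ab_group_add \<Rightarrow> 'w) \<Rightarrow> ('v \<Rightarrow> int \<Rightarrow> 'w \<Rightarrow> 'w)
     \<Rightarrow> complex \<Rightarrow> ('w \<Rightarrow> complex) set" where
  "DPz sV Y om sW YW z = {\<alpha>. Vector_Spaces.linear sW (*) \<alpha> \<and>
     (\<forall>v. \<exists>M N :: nat. \<forall>w. \<exists>P :: complex poly. \<forall>x. norm z < norm x \<longrightarrow>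
        ((\<lambda>p. \<alpha> (Yo sV Y om sW YW v p w) * x powi p)
           has_sum (poly P x / (x ^ M * (x - z) ^ N))) UNIV)}"

text \<open>iota_{x;0} of iota_{x;infinity}^{-1} c, and iota_{x;0} of (iota_{x;infinity}^{-1} c)(x+z).\<close>
definition expR :: "complex \<Rightarrow> (int \<Rightarrow> complex) \<Rightarrow> int \<Rightarrow> complex" where
  "expR z c = (THE d. \<exists>(P :: complex poly) (M :: nat) (N :: nat).
      (\<forall>x. norm z < norm x \<longrightarrow>
         ((\<lambda>p. c p * x powi p) has_sum (poly P x / (x ^ M * (x - z) ^ N))) UNIV) \<and>
      (\<exists>K. \<forall>k<K. d k = 0) \<and>
      (\<forall>x. 0 < norm x \<and> norm x < norm z \<longrightarrow>
         ((\<lambda>p. d p * x powi p) has_sum (poly P x / (x ^ M * (x - z) ^ N))) UNIV))"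

definition expL :: "complex \<Rightarrow> (int \<Rightarrow> complex) \<Rightarrow> int \<Rightarrow> complex" where
  "expL z c = (THE d. \<exists>(P :: complex poly) (M :: nat) (N :: nat).
      (\<forall>x. norm z < norm x \<longrightarrow>
         ((\<lambda>p. c p * x powi p) has_sum (poly P x / (x ^ M * (x - z) ^ N))) UNIV) \<and>
      (\<exists>K. \<forall>k<K. d k = 0) \<and>
      (\<forall>y. 0 < norm y \<and> norm y < norm z \<longrightarrow>
         ((\<lambda>p. d p * y powi p) has_sum (poly P (y + z) / ((y + z) ^ M * y ^ N))) UNIV))"

text \<open>Coefficient of x^n in Y^R_{P(z)}(v,x) alpha and Y^L_{P(z)}(v,x) alpha.\<close>
definition YR :: "(complex \<Rightarrow> 'v::ab_group_add \<Rightarrow> 'v) \<Rightarrow> ('v \<Rightarrow> int \<Rightarrow> 'v \<Rightarrow> 'v) \<Rightarrow> 'v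
     \<Rightarrow> (complex \<Rightarrow> 'w::ab_group_add \<Rightarrow> 'w) \<Rightarrow> ('v \<Rightarrow> int \<Rightarrow> 'w \<Rightarrow> 'w)
     \<Rightarrow> complex \<Rightarrow> 'v \<Rightarrow> int \<Rightarrow> ('w \<Rightarrow> complex) \<Rightarrow> ('w \<Rightarrow> complex)" where
  "YR sV Y om sW YW z v n \<alpha> = (\<lambda>w. expR z (\<lambda>p. \<alpha> (Yo sV Y om sW YW v p w)) n)"

definition YL :: "(complex \<Rightarrow> 'v::ab_group_add \<Rightarrow> 'v) \<Rightarrow> ('v \<Rightarrow> int \<Rightarrow> 'v \<Rightarrow> 'v) \<Rightarrow> 'v
     \<Rightarrow> (complex \<Rightarrow> 'w::ab_group_add \<Rightarrow> 'w) \<Rightarrow> ('v \<Rightarrow> int \<Rightarrow> 'w \<Rightarrow> 'w)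
     \<Rightarrow> complex \<Rightarrow> 'v \<Rightarrow> int \<Rightarrow> ('w \<Rightarrow> complex) \<Rightarrow> ('w \<Rightarrow> complex)" where
  "YL sV Y om sW YW z v n \<alpha> = (\<lambda>w. expL z (\<lambda>p. \<alpha> (Yo sV Y om sW YW v p w)) n)"

end

theory Submission
  imports Defs "HOL-Complex_Analysis.Complex_Analysis"
begin

(* Write A p q and B p q for the coefficients of x1^p x2^q in w |-> alpha(Y^o(v, x2) Y^o(u, x1) w)
   and in w |-> alpha(Y^o(u, x1) Y^o(v, x2) w).  Both sides of the claim are iterated expansions:
   Y^L(u) Y^R(v) alpha expands each row of A (a rational function of x2 with poles only at 0 and z)
   around 0 and then the resulting columns around x1 = z, while Y^R(v) Y^L(u) alpha treats B in the
   other order.  The Jacobi identity gives locality, (x1 - x2)^K A = (x1 - x2)^K B.  For K = 0 both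
   iterated expansions are finite linear combinations of coefficients, so they commute.  Multiplying
   by x1 - x2 lowers K; by induction, both sides then satisfy the same recursion
   F(m - 1, n) + z F(m, n) - F(m, n - 1) = G(m, n), whose solution is unique among arrays supported
   in the respective cones. *)

section \<open>Laurent expansions of rational functions\<close>

lemma has_sum_diff:
  fixes f g :: "'a \<Rightarrow> 'b::topological_ab_group_add"
  assumes "(f has_sum a) A" "(g has_sum b) A"
  shows "((\<lambda>x. f x - g x) has_sum (a - b)) A"
proof -
  have "((\<lambda>x. - g x) has_sum - b) A"
    using has_sum_uminus[of g A "- b"] assms(2) by simp
  from has_sum_add[OF assms(1) this] show ?thesis by simp
qed

lemma has_sum_sum:
  fixes f :: "'i \<Rightarrow> 'a \<Rightarrow> 'b::topological_comm_monoid_add"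
  assumes "finite I" "\<And>i. i \<in> I \<Longrightarrow> (f i has_sum s i) A"
  shows "((\<lambda>x. \<Sum>i\<in>I. f i x) has_sum (\<Sum>i\<in>I. s i)) A"
  using assms by (induction I rule: finite_induct) (auto intro: has_sum_add)

lemma has_sum_powi_linear_combination:
  fixes g :: "'i \<Rightarrow> int \<Rightarrow> complex"
  assumes "finite I" "\<And>i. i \<in> I \<Longrightarrow> ((\<lambda>p. g i p * x powi p) has_sum s i) UNIV"
  shows "((\<lambda>p. (\<Sum>i\<in>I. a i * g i p) * x powi p) has_sum (\<Sum>i\<in>I. a i * s i)) UNIV"
proof -
  have "((\<lambda>p. \<Sum>i\<in>I. a i * (g i p * x powi p)) has_sum (\<Sum>i\<in>I. a i * s i)) UNIV"
    using assms by (intro has_sum_sum has_sum_cmult_right)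
  then show ?thesis by (simp add: sum_distrib_right mult.assoc)
qed

lemma has_sum_powi_shift:
  fixes c :: "int \<Rightarrow> complex"
  assumes "x \<noteq> 0" and "((\<lambda>p. c p * x powi p) has_sum S) UNIV"
  shows "((\<lambda>p. c (p - a) * x powi p) has_sum (x powi a * S)) UNIV"
proof -
  have "bij_betw (\<lambda>p::int. p - a) UNIV UNIV"
    by (rule bij_betwI[where g="\<lambda>p. p + a"]) auto
  then have "((\<lambda>p. x powi a * (c (p - a) * x powi (p - a))) has_sum (x powi a * S)) UNIV"
    using has_sum_reindex_bij_betw[of "\<lambda>p. p - a" UNIV UNIV "\<lambda>p. x powi a * (c p * x powi p)"]
      has_sum_cmult_right[OF assms(2)] by simp
  moreover have "x powi a * (c (p - a) * x powi (p - a)) = c (p - a) * x powi p" for p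
    using assms(1) by (simp add: power_int_diff field_simps)
  ultimately show ?thesis by simp
qed

lemma has_sum_powi_uminus:
  fixes c :: "int \<Rightarrow> complex"
  assumes "((\<lambda>p. c p * inverse x powi p) has_sum S) UNIV"
  shows "((\<lambda>p. c (- p) * x powi p) has_sum S) UNIV"
proof -
  have "bij_betw uminus UNIV (UNIV::int set)"
    by (rule bij_betwI[where g=uminus]) auto
  then show ?thesis
    using has_sum_reindex_bij_betw[of uminus UNIV UNIV "\<lambda>p. c p * inverse x powi p"] assms
    by (simp add: power_int_minus power_int_inverse)
qed

lemma has_sum_powi_of_nat:
  fixes a :: "nat \<Rightarrow> complex"
  assumes "((\<lambda>n. a n * x ^ n) has_sum S) UNIV"
  shows "((\<lambda>p. (if 0 \<le> p then a (nat p) else 0) * x powi p) has_sum S) UNIV"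
proof -
  have "bij_betw int UNIV {0..}"
    by (rule bij_betwI[where g=nat]) auto
  then have "((\<lambda>p. (if 0 \<le> p then a (nat p) else 0) * x powi p) has_sum S) {0..}"
    using has_sum_reindex_bij_betw[of int UNIV "{0..}" "\<lambda>p. (if 0 \<le> p then a (nat p) else 0) * x powi p"]
      assms by simp
  then show ?thesis
    by (subst has_sum_cong_neutral[where T="{0..}"]) auto
qed

lemma holomorphic_has_sum_power_series:
  fixes g :: "complex \<Rightarrow> complex"
  assumes "g holomorphic_on ball 0 r"
  shows "\<exists>a::nat \<Rightarrow> complex. \<forall>x\<in>ball 0 r. ((\<lambda>n. a n * x ^ n) has_sum g x) UNIV"
proof (intro exI ballI)
  fix x :: complex assume x: "x \<in> ball 0 r"
  define a where "a n = (deriv ^^ n) g 0 / fact n" for n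
  define r' where "r' = (norm x + r) / 2"
  have r': "norm x < r'" "r' < r" using x by (auto simp: r'_def)
  moreover have "0 < r'" using r'(1) norm_ge_zero[of x] by linarith
  ultimately have "complex_of_real r' \<in> ball 0 r" by simp
  then have "(\<lambda>n. a n * (complex_of_real r' - 0) ^ n) sums g (complex_of_real r')"
    unfolding a_def by (rule holomorphic_power_series[OF assms])
  then have "norm (complex_of_real r') \<le> conv_radius a"
    by (intro conv_radius_geI) (auto simp: sums_iff)
  then have "ereal (norm x) < conv_radius a"
    using r' \<open>0 < r'\<close> order.strict_trans2[of "ereal (norm x)" "ereal r'" "conv_radius a"] by simp
  then have "summable (\<lambda>n. norm (a n * x ^ n))"
    by (rule abs_summable_in_conv_radius)
  moreover have "(\<lambda>n. a n * (x - 0) ^ n) sums g x"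
    unfolding a_def by (rule holomorphic_power_series[OF assms x])
  ultimately show "((\<lambda>n. a n * x ^ n) has_sum g x) UNIV"
    using norm_summable_imp_has_sum by simp
qed

lemma power_series_zero_near_0:
  fixes a :: "nat \<Rightarrow> complex"
  assumes "r > 0" and sums: "\<And>x. 0 < norm x \<Longrightarrow> norm x < r \<Longrightarrow> (\<lambda>n. a n * x ^ n) sums 0"
  shows "a n = 0"
proof -
  define F where "F = Abs_fps a"
  have "summable (\<lambda>n. a n * complex_of_real (r/2) ^ n)"
    using sums[of "r/2"] \<open>r > 0\<close> by (auto simp: sums_iff)
  then have "norm (complex_of_real (r/2)) \<le> conv_radius a"
    by (rule conv_radius_geI)
  then have radius: "fps_conv_radius F > 0" using \<open>r > 0\<close>
    by (auto simp: F_def fps_conv_radius_def intro: order.strict_trans2[rotated])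
  have eval_0: "eval_fps F x = 0" if "0 < norm x" "norm x < r" for x
    using sums[OF that] by (simp add: F_def eval_fps_def sums_iff)
  have "(eval_fps F \<longlongrightarrow> eval_fps F 0) (at 0)"
    using continuous_eval_fps[of 0 F] radius by (simp add: continuous_within zero_ereal_def)
  moreover have "eventually (\<lambda>x. eval_fps F x = 0) (at 0)"
    unfolding eventually_at using \<open>r > 0\<close> by (intro exI[of _ r]) (auto simp: dist_norm eval_0)
  ultimately have "((\<lambda>_. 0) \<longlongrightarrow> eval_fps F 0) (at (0::complex))"
    by (auto elim: Lim_transform_eventually)
  then have "eval_fps F 0 = 0" by (simp add: tendsto_const_iff)
  then have "eval_fps F x = 0" if "norm x < r" for x
    using eval_0[of x] that by (cases "x = 0") auto
  then have "eventually (\<lambda>x. eval_fps F x = 0) (nhds 0)"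
    unfolding eventually_nhds_metric using \<open>r > 0\<close>
    by (intro exI[of _ r]) (auto simp: dist_norm)
  then have "(\<lambda>_. 0) has_fps_expansion F"
    using radius unfolding has_fps_expansion_def by simp
  then have "F = 0"
    using fps_expansion_unique_complex[of "\<lambda>_. 0" F 0] by (simp add: has_fps_expansion_def)
  then show ?thesis
    by (metis F_def fps_nth_Abs_fps fps_zero_nth)
qed

lemma laurent_zero_near_0:
  fixes d :: "int \<Rightarrow> complex"
  assumes below: "\<And>k. k < K \<Longrightarrow> d k = 0" and "r > 0"
    and sums: "\<And>x. 0 < norm x \<Longrightarrow> norm x < r \<Longrightarrow> ((\<lambda>p. d p * x powi p) has_sum 0) UNIV"
  shows "d = (\<lambda>_. 0)"
proof -
  define a where "a n = d (int n + K)" for n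
  have "(\<lambda>n. a n * x ^ n) sums 0" if "0 < norm x" "norm x < r" for x
  proof -
    have "((\<lambda>p. d (p + K) * x powi p) has_sum 0) UNIV"
      using has_sum_powi_shift[of x d 0 "- K"] sums that by simp
    then have "((\<lambda>p. d (p + K) * x powi p) has_sum 0) {0..}"
      by (subst has_sum_cong_neutral[where T=UNIV]) (auto simp: below)
    moreover have "bij_betw int UNIV {0..}"
      by (rule bij_betwI[where g=nat]) auto
    ultimately have "((\<lambda>n. d (int n + K) * x ^ n) has_sum 0) UNIV"
      using has_sum_reindex_bij_betw[of int UNIV "{0..}" "\<lambda>p. d (p + K) * x powi p"] by simp
    then show ?thesis unfolding a_def by (rule has_sum_imp_sums)
  qed
  then have "a n = 0" for n
    by (rule power_series_zero_near_0[OF \<open>r > 0\<close>])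
  then have "d (int n + K) = 0" for n
    by (simp add: a_def)
  moreover have "k = int (nat (k - K)) + K" if "\<not> k < K" for k
    using that by simp
  ultimately have "d k = 0" for k
    using below[of k] by (cases "k < K") metis+
  then show ?thesis by auto
qed

lemma laurent_unique_near_0:
  fixes d d' :: "int \<Rightarrow> complex"
  assumes "\<And>k. k < K \<Longrightarrow> d k = 0" "\<And>k. k < K' \<Longrightarrow> d' k = 0" "r > 0"
    and "\<And>x. 0 < norm x \<Longrightarrow> norm x < r \<Longrightarrow> ((\<lambda>p. d p * x powi p) has_sum f x) UNIV"
    and "\<And>x. 0 < norm x \<Longrightarrow> norm x < r \<Longrightarrow> ((\<lambda>p. d' p * x powi p) has_sum f x) UNIV"
  shows "d = d'"
proof -
  have "(\<lambda>p. d p - d' p) = (\<lambda>_. 0)"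
  proof (rule laurent_zero_near_0)
    show "d k - d' k = 0" if "k < min K K'" for k
      using assms(1,2) that by simp
    show "0 < r" by (fact assms(3))
    fix x :: complex assume x: "0 < norm x" "norm x < r"
    have "((\<lambda>p. d p * x powi p - d' p * x powi p) has_sum (f x - f x)) UNIV"
      by (rule has_sum_diff[OF assms(4)[OF x] assms(5)[OF x]])
    then show "((\<lambda>p. (d p - d' p) * x powi p) has_sum 0) UNIV"
      by (simp add: left_diff_distrib)
  qed
  then show ?thesis
    by (simp add: fun_eq_iff)
qed

lemma laurent_zero_near_infinity:
  fixes c :: "int \<Rightarrow> complex"
  assumes above: "\<And>p. p > P \<Longrightarrow> c p = 0" and "R \<ge> 0"
    and sums: "\<And>x. R < norm x \<Longrightarrow> ((\<lambda>p. c p * x powi p) has_sum 0) UNIV"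
  shows "c = (\<lambda>_. 0)"
proof -
  have "(\<lambda>q. c (- q)) = (\<lambda>_. 0)"
  proof (rule laurent_zero_near_0[of "- P" _ "1 / (R + 1)"])
    fix t :: complex assume t: "0 < norm t" "norm t < 1 / (R + 1)"
    then have "R + 1 < 1 / norm t" using \<open>R \<ge> 0\<close> by (simp add: field_simps)
    then have "R < norm (inverse t)" by (simp add: norm_inverse divide_inverse)
    then show "((\<lambda>q. c (- q) * t powi q) has_sum 0) UNIV"
      using sums has_sum_powi_uminus[of c t 0] by simp
  qed (use assms in auto)
  then show ?thesis by (metis minus_minus)
qed

lemma expansion_at_infinity_exists:
  fixes z :: complex and k :: int
  assumes "z \<noteq> 0"
  shows "\<exists>c. (\<forall>p > k - int M - int N. c p = 0) \<and> (\<forall>x. norm z < norm x \<longrightarrow>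
     ((\<lambda>p. c p * x powi p) has_sum (x powi k / (x^M * (x - z)^N))) UNIV)"
proof -
  \<comment> \<open>With \<open>t = 1 / x\<close>, the function is \<open>t^(M + N - k) / (1 - z t)^N\<close>.\<close>
  have "1 - z * t \<noteq> 0" if "t \<in> ball 0 (1 / norm z)" for t
  proof
    assume "1 - z * t = 0"
    then have "norm z * norm t = 1" by (metis norm_mult norm_one right_minus_eq)
    moreover have "norm t < 1 / norm z" using that by simp
    ultimately show False using assms by (simp add: field_simps)
  qed
  then have "(\<lambda>t. 1 / (1 - z * t)^N) holomorphic_on ball 0 (1 / norm z)"
    by (intro holomorphic_intros) auto
  then obtain a where a: "\<forall>t\<in>ball 0 (1 / norm z). ((\<lambda>n. a n * t^n) has_sum (1 / (1 - z * t)^N)) UNIV"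
    using holomorphic_has_sum_power_series by blast
  define s where "s = int M + int N - k"
  define d where "d p = (if 0 \<le> p - s then a (nat (p - s)) else 0)" for p
  define c where "c p = d (- p)" for p
  show ?thesis
  proof (intro exI[of _ c] conjI allI impI)
    fix p assume "p > k - int M - int N" then show "c p = 0" by (simp add: c_def d_def s_def)
  next
    fix x :: complex assume x: "norm z < norm x"
    then have "x \<noteq> 0" "x - z \<noteq> 0" by auto
    have "1 / norm x < 1 / norm z"
      using x assms by (intro divide_strict_left_mono) (auto intro!: mult_pos_pos)
    then have "norm (inverse x) < 1 / norm z"
      by (simp add: norm_inverse divide_inverse)
    then have "((\<lambda>p. (if 0 \<le> p then a (nat p) else 0) * inverse x powi p) has_sum (1 / (1 - z * inverse x)^N)) UNIV"
      using a by (intro has_sum_powi_of_nat) simp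
    then have "((\<lambda>p. d p * inverse x powi p) has_sum (inverse x powi s * (1 / (1 - z * inverse x)^N))) UNIV"
      unfolding d_def using \<open>x \<noteq> 0\<close> by (intro has_sum_powi_shift) auto
    then have "((\<lambda>p. c p * x powi p) has_sum (inverse x powi s * (1 / (1 - z * inverse x)^N))) UNIV"
      unfolding c_def by (rule has_sum_powi_uminus)
    moreover have "inverse x powi s * (1 / (1 - z * inverse x)^N) = x powi k / (x^M * (x - z)^N)"
    proof -
      have "inverse x powi s = x powi k / (x^M * x^N)"
        using \<open>x \<noteq> 0\<close> by (simp add: s_def power_int_inverse power_int_diff power_int_add field_simps)
      moreover have "1 - z * inverse x = (x - z) / x" using \<open>x \<noteq> 0\<close> by (simp add: field_simps)
      ultimately show ?thesis using \<open>x \<noteq> 0\<close> \<open>x - z \<noteq> 0\<close> by (simp add: power_divide field_simps)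
    qed
    ultimately show "((\<lambda>p. c p * x powi p) has_sum (x powi k / (x^M * (x - z)^N))) UNIV" by simp
  qed
qed

lemma expansion_at_0_exists:
  fixes z :: complex and k :: int
  assumes "z \<noteq> 0"
  shows "\<exists>d. (\<forall>p < k - int M. d p = 0) \<and> (\<forall>x. 0 < norm x \<and> norm x < norm z \<longrightarrow>
     ((\<lambda>p. d p * x powi p) has_sum (x powi k / (x^M * (x - z)^N))) UNIV)"
proof -
  have "(\<lambda>x. 1 / (x - z)^N) holomorphic_on ball 0 (norm z)"
    by (intro holomorphic_intros) auto
  then obtain a where a: "\<forall>x\<in>ball 0 (norm z). ((\<lambda>n. a n * x^n) has_sum (1 / (x - z)^N)) UNIV"
    using holomorphic_has_sum_power_series by blast
  define d where "d p = (if 0 \<le> p - (k - int M) then a (nat (p - (k - int M))) else 0)" for p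
  show ?thesis
  proof (intro exI[of _ d] conjI allI impI)
    fix p assume "p < k - int M" then show "d p = 0" by (simp add: d_def)
  next
    fix x :: complex assume x: "0 < norm x \<and> norm x < norm z"
    have "((\<lambda>p. (if 0 \<le> p then a (nat p) else 0) * x powi p) has_sum (1 / (x - z)^N)) UNIV"
      using a x by (intro has_sum_powi_of_nat) simp
    then have "((\<lambda>p. d p * x powi p) has_sum (x powi (k - int M) * (1 / (x - z)^N))) UNIV"
      unfolding d_def using x by (intro has_sum_powi_shift) auto
    moreover have "x powi (k - int M) * (1 / (x - z)^N) = x powi k / (x^M * (x - z)^N)"
      using x by (simp add: power_int_diff field_simps)
    ultimately show "((\<lambda>p. d p * x powi p) has_sum (x powi k / (x^M * (x - z)^N))) UNIV" by simp
  qed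
qed

lemma expansion_at_z_exists:
  fixes z :: complex and k :: int
  assumes "z \<noteq> 0"
  shows "\<exists>d. (\<forall>p < - int N. d p = 0) \<and> (\<forall>y. 0 < norm y \<and> norm y < norm z \<longrightarrow>
     ((\<lambda>p. d p * y powi p) has_sum ((y + z) powi k / ((y + z)^M * y^N))) UNIV)"
proof -
  have "y + z \<noteq> 0" if "y \<in> ball 0 (norm z)" for y
    using that by (auto simp: add_eq_0_iff)
  then have "(\<lambda>y. (y + z) powi k / (y + z)^M) holomorphic_on ball 0 (norm z)"
    by (intro holomorphic_intros) auto
  then obtain a where a: "\<forall>y\<in>ball 0 (norm z). ((\<lambda>n. a n * y^n) has_sum ((y + z) powi k / (y + z)^M)) UNIV"
    using holomorphic_has_sum_power_series by blast
  define d where "d p = (if 0 \<le> p + int N then a (nat (p + int N)) else 0)" for p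
  show ?thesis
  proof (intro exI[of _ d] conjI allI impI)
    fix p assume "p < - int N" then show "d p = 0" by (simp add: d_def)
  next
    fix y :: complex assume y: "0 < norm y \<and> norm y < norm z"
    have "((\<lambda>p. (if 0 \<le> p then a (nat p) else 0) * y powi p) has_sum ((y + z) powi k / (y + z)^M)) UNIV"
      using a y by (intro has_sum_powi_of_nat) simp
    then have "((\<lambda>p. d p * y powi p) has_sum (y powi (- int N) * ((y + z) powi k / (y + z)^M))) UNIV"
      unfolding d_def using y has_sum_powi_shift[of y _ _ "- int N"] by fastforce
    moreover have "y powi (- int N) * ((y + z) powi k / (y + z)^M) = (y + z) powi k / ((y + z)^M * y^N)"
      using y by (simp add: power_int_minus field_simps)
    ultimately show "((\<lambda>p. d p * y powi p) has_sum ((y + z) powi k / ((y + z)^M * y^N))) UNIV" by simp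
  qed
qed

definition expansion_inf :: "complex \<Rightarrow> nat \<Rightarrow> nat \<Rightarrow> int \<Rightarrow> int \<Rightarrow> complex" where
  "expansion_inf z M N k = (SOME c. (\<forall>p > k - int M - int N. c p = 0) \<and> (\<forall>x. norm z < norm x \<longrightarrow>
     ((\<lambda>p. c p * x powi p) has_sum (x powi k / (x^M * (x - z)^N))) UNIV))"

definition expansion_0 :: "complex \<Rightarrow> nat \<Rightarrow> nat \<Rightarrow> int \<Rightarrow> int \<Rightarrow> complex" where
  "expansion_0 z M N k = (SOME d. (\<forall>p < k - int M. d p = 0) \<and> (\<forall>x. 0 < norm x \<and> norm x < norm z \<longrightarrow>
     ((\<lambda>p. d p * x powi p) has_sum (x powi k / (x^M * (x - z)^N))) UNIV))"

definition expansion_z :: "complex \<Rightarrow> nat \<Rightarrow> nat \<Rightarrow> int \<Rightarrow> int \<Rightarrow> complex" where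
  "expansion_z z M N k = (SOME d. (\<forall>p < - int N. d p = 0) \<and> (\<forall>y. 0 < norm y \<and> norm y < norm z \<longrightarrow>
     ((\<lambda>p. d p * y powi p) has_sum ((y + z) powi k / ((y + z)^M * y^N))) UNIV))"

lemma expansion_inf:
  assumes "z \<noteq> 0"
  shows "p > k - int M - int N \<Longrightarrow> expansion_inf z M N k p = 0"
    and "norm z < norm x \<Longrightarrow>
      ((\<lambda>p. expansion_inf z M N k p * x powi p) has_sum (x powi k / (x^M * (x - z)^N))) UNIV"
  using someI_ex[OF expansion_at_infinity_exists[OF assms]] unfolding expansion_inf_def by blast+

lemma expansion_0:
  assumes "z \<noteq> 0"
  shows "p < k - int M \<Longrightarrow> expansion_0 z M N k p = 0"
    and "0 < norm x \<Longrightarrow> norm x < norm z \<Longrightarrow>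
      ((\<lambda>p. expansion_0 z M N k p * x powi p) has_sum (x powi k / (x^M * (x - z)^N))) UNIV"
  using someI_ex[OF expansion_at_0_exists[OF assms]] unfolding expansion_0_def by blast+

lemma expansion_z:
  assumes "z \<noteq> 0"
  shows "p < - int N \<Longrightarrow> expansion_z z M N k p = 0"
    and "0 < norm y \<Longrightarrow> norm y < norm z \<Longrightarrow>
      ((\<lambda>p. expansion_z z M N k p * y powi p) has_sum ((y + z) powi k / ((y + z)^M * y^N))) UNIV"
  using someI_ex[OF expansion_at_z_exists[OF assms]] unfolding expansion_z_def by blast+

lemma expansion_0_shift:
  assumes "z \<noteq> 0"
  shows "expansion_0 z M N (k + 1) n = expansion_0 z M N k (n - 1)"
proof -
  have "expansion_0 z M N (k + 1) = (\<lambda>n. expansion_0 z M N k (n - 1))"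
  proof (rule laurent_unique_near_0[where K = "k - int M" and K' = "k - int M"])
    show "0 < norm z" using assms by simp
    fix x :: complex assume x: "0 < norm x" "norm x < norm z"
    show "((\<lambda>p. expansion_0 z M N (k + 1) p * x powi p) has_sum (x powi (k + 1) / (x^M * (x - z)^N))) UNIV"
      by (rule expansion_0(2)[OF assms x])
    have "((\<lambda>p. expansion_0 z M N k (p - 1) * x powi p) has_sum (x powi 1 * (x powi k / (x^M * (x - z)^N)))) UNIV"
      using x by (intro has_sum_powi_shift expansion_0(2)[OF assms]) auto
    moreover have "x powi (k + 1) = x powi 1 * x powi k" using x by (simp add: power_int_add)
    ultimately show "((\<lambda>p. expansion_0 z M N k (p - 1) * x powi p) has_sum (x powi (k + 1) / (x^M * (x - z)^N))) UNIV"
      by simp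
  qed (use expansion_0(1)[OF assms] in auto)
  then show ?thesis by simp
qed

lemma expansion_z_shift:
  assumes "z \<noteq> 0"
  shows "expansion_z z M N (k + 1) m = expansion_z z M N k (m - 1) + z * expansion_z z M N k m"
proof -
  have "expansion_z z M N (k + 1) = (\<lambda>m. expansion_z z M N k (m - 1) + z * expansion_z z M N k m)"
  proof (rule laurent_unique_near_0[where K = "- int N" and K' = "- int N"])
    show "0 < norm z" using assms by simp
    fix y :: complex assume y: "0 < norm y" "norm y < norm z"
    then have "y \<noteq> 0" "y + z \<noteq> 0" by (auto simp: add_eq_0_iff)
    define D where "D = (y + z)^M * y^N"
    let ?g = "\<lambda>p. expansion_z z M N k p * y powi p"
    show "((\<lambda>p. expansion_z z M N (k + 1) p * y powi p) has_sum ((y + z) powi (k + 1) / D)) UNIV"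
      unfolding D_def by (rule expansion_z(2)[OF assms y])
    have g: "(?g has_sum ((y + z) powi k / D)) UNIV"
      unfolding D_def by (rule expansion_z(2)[OF assms y])
    have "((\<lambda>p. expansion_z z M N k (p - 1) * y powi p + z * ?g p) has_sum
        (y powi 1 * ((y + z) powi k / D) + z * ((y + z) powi k / D))) UNIV"
      by (rule has_sum_add[OF has_sum_powi_shift[OF \<open>y \<noteq> 0\<close> g] has_sum_cmult_right[OF g]])
    moreover have "(y + z) powi (k + 1) = (y + z) * (y + z) powi k"
      using \<open>y + z \<noteq> 0\<close> by (simp add: power_int_add)
    then have "y powi 1 * ((y + z) powi k / D) + z * ((y + z) powi k / D) = (y + z) powi (k + 1) / D"
      by (simp add: add_divide_distrib ring_distribs)
    ultimately show "((\<lambda>p. (expansion_z z M N k (p - 1) + z * expansion_z z M N k p) * y powi p)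
        has_sum ((y + z) powi (k + 1) / D)) UNIV"
      by (simp add: algebra_simps)
  qed (use expansion_z(1)[OF assms] in auto)
  then show ?thesis by simp
qed

lemma rational_eq_off_poles:
  fixes P1 P2 :: "complex poly"
  assumes eq: "\<And>x. norm z < norm x \<Longrightarrow> poly P1 x / (x^M1 * (x - z)^N1) = poly P2 x / (x^M2 * (x - z)^N2)"
    and "x \<noteq> 0" "x \<noteq> z"
  shows "poly P1 x / (x^M1 * (x - z)^N1) = poly P2 x / (x^M2 * (x - z)^N2)"
proof -
  define Q where "Q = P1 * ([:0, 1:]^M2 * [:- z, 1:]^N2) - P2 * ([:0, 1:]^M1 * [:- z, 1:]^N1)"
  have poly_Q: "poly Q y = poly P1 y * (y^M2 * (y - z)^N2) - poly P2 y * (y^M1 * (y - z)^N1)" for y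
    by (simp add: Q_def)
  have roots: "poly Q y = 0" if "norm z < norm y" for y
  proof -
    have "y^M1 * (y - z)^N1 \<noteq> 0" "y^M2 * (y - z)^N2 \<noteq> 0" using that by auto
    then show ?thesis using eq[OF that] by (simp add: poly_Q frac_eq_eq)
  qed
  have "Q = 0"
  proof (rule ccontr)
    assume "Q \<noteq> 0"
    define f where "f n = complex_of_real (norm z + 1 + real n)" for n
    have "norm (f n) = norm z + 1 + real n" for n
      unfolding f_def by (simp only: norm_of_real) simp
    then have "range f \<subseteq> {y. poly Q y = 0}" using roots by auto
    then have "finite (range f)"
      using poly_roots_finite[OF \<open>Q \<noteq> 0\<close>] finite_subset by blast
    moreover have "inj f" by (auto simp: inj_def f_def)
    ultimately show False using finite_imageD by fastforce
  qed
  moreover have "x^M1 * (x - z)^N1 \<noteq> 0" "x^M2 * (x - z)^N2 \<noteq> 0" using assms by auto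
  ultimately show ?thesis using poly_Q[of x] by (simp add: frac_eq_eq)
qed

lemma rational_sum_unique:
  fixes c :: "int \<Rightarrow> complex"
  assumes "\<And>x. norm z < norm x \<Longrightarrow> ((\<lambda>p. c p * x powi p) has_sum (poly P x / (x^M * (x - z)^N))) UNIV"
    and "\<And>x. norm z < norm x \<Longrightarrow> ((\<lambda>p. c p * x powi p) has_sum (poly P' x / (x^M' * (x - z)^N'))) UNIV"
    and "x \<noteq> 0" "x \<noteq> z"
  shows "poly P' x / (x^M' * (x - z)^N') = poly P x / (x^M * (x - z)^N)"
proof (rule rational_eq_off_poles)
  fix y :: complex assume "norm z < norm y"
  show "poly P' y / (y^M' * (y - z)^N') = poly P y / (y^M * (y - z)^N)"
    using has_sum_unique[OF assms(2) assms(1)] \<open>norm z < norm y\<close> by blast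
qed (use assms(3,4) in auto)

section \<open>Series of rational functions with poles at \<open>0\<close> and \<open>z\<close>\<close>

text \<open>On rational series, \<open>expR\<close> and \<open>expL\<close> read only finitely many coefficients; this is
  what lets the two iterated expansions of a double series commute.\<close>

definition finite_linear_form :: "((int \<Rightarrow> complex) \<Rightarrow> complex) \<Rightarrow> bool" where
  "finite_linear_form \<Phi> \<longleftrightarrow> (\<exists>S w. finite S \<and> (\<forall>c. \<Phi> c = (\<Sum>p\<in>S. w p * c p)))"

lemma finite_linear_form_eval: "finite_linear_form (\<lambda>c. c p)"
  unfolding finite_linear_form_def by (rule exI[of _ "{p}"], rule exI[of _ "\<lambda>_. 1"]) simp

lemma finite_linear_form_lincomb:
  assumes "finite_linear_form \<Phi>" "finite_linear_form \<Psi>"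
  shows "finite_linear_form (\<lambda>c. a * \<Phi> c + b * \<Psi> c)"
proof -
  obtain S v T w where S: "finite S" "\<And>c. \<Phi> c = (\<Sum>p\<in>S. v p * c p)"
    and T: "finite T" "\<And>c. \<Psi> c = (\<Sum>p\<in>T. w p * c p)"
    using assms unfolding finite_linear_form_def by blast
  define u where "u p = a * (if p \<in> S then v p else 0) + b * (if p \<in> T then w p else 0)" for p
  have "a * \<Phi> c + b * \<Psi> c = (\<Sum>p\<in>S \<union> T. u p * c p)" for c
  proof -
    have "\<Phi> c = (\<Sum>p\<in>S \<union> T. (if p \<in> S then v p else 0) * c p)"
      unfolding S(2) using S(1) T(1) by (intro sum.mono_neutral_cong_left) auto
    moreover have "\<Psi> c = (\<Sum>p\<in>S \<union> T. (if p \<in> T then w p else 0) * c p)"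
      unfolding T(2) using S(1) T(1) by (intro sum.mono_neutral_cong_left) auto
    ultimately show ?thesis
      by (simp add: u_def sum_distrib_left sum.distrib algebra_simps)
  qed
  then show ?thesis
    unfolding finite_linear_form_def using S(1) T(1) by blast
qed

lemma finite_linear_form_sum:
  assumes "finite I" "\<And>i. i \<in> I \<Longrightarrow> finite_linear_form (\<Phi> i)"
  shows "finite_linear_form (\<lambda>c. \<Sum>i\<in>I. \<Phi> i c)"
  using assms
proof (induction I rule: finite_induct)
  case empty
  show ?case
    unfolding finite_linear_form_def by (rule exI[of _ "{}"]) simp
next
  case (insert i I)
  then show ?case
    using finite_linear_form_lincomb[of "\<Phi> i" "\<lambda>c. \<Sum>i\<in>I. \<Phi> i c" 1 1] by simp
qed

lemma finite_linear_form_apply_lincomb: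
  "finite_linear_form \<Phi> \<Longrightarrow> \<Phi> (\<lambda>p. a * f p + b * g p) = a * \<Phi> f + b * \<Phi> g"
  unfolding finite_linear_form_def
  by (auto simp: sum.distrib sum_distrib_left algebra_simps)

lemma finite_linear_form_apply_sum:
  assumes "finite_linear_form \<Phi>"
  shows "\<Phi> (\<lambda>p. \<Sum>i\<in>I. f i p) = (\<Sum>i\<in>I. \<Phi> (f i))"
proof -
  obtain S w where "\<And>c. \<Phi> c = (\<Sum>p\<in>S. w p * c p)"
    using assms unfolding finite_linear_form_def by blast
  then show ?thesis
    by (simp add: sum_distrib_left sum.swap[of _ S])
qed

lemma finite_linear_form_apply_zero:
  "finite_linear_form \<Phi> \<Longrightarrow> \<Phi> (\<lambda>_. 0) = 0"
  unfolding finite_linear_form_def by auto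

lemma finite_linear_form_swap:
  assumes "finite_linear_form \<Phi>" "finite_linear_form \<Psi>"
  shows "\<Phi> (\<lambda>q. \<Psi> (\<lambda>p. C p q)) = \<Psi> (\<lambda>p. \<Phi> (C p))"
proof -
  obtain S v T w where "finite S" "\<And>c. \<Phi> c = (\<Sum>q\<in>S. v q * c q)"
    and "finite T" "\<And>c. \<Psi> c = (\<Sum>p\<in>T. w p * c p)"
    using assms unfolding finite_linear_form_def by blast
  then have "\<Phi> (\<lambda>q. \<Psi> (\<lambda>p. C p q)) = (\<Sum>q\<in>S. \<Sum>p\<in>T. w p * (v q * C p q))"
    by (simp add: sum_distrib_left mult.left_commute)
  also have "\<dots> = \<Psi> (\<lambda>p. \<Phi> (C p))"
    using \<open>\<And>c. \<Psi> c = _\<close> \<open>\<And>c. \<Phi> c = _\<close> by (simp add: sum.swap[of _ S] sum_distrib_left)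
  finally show ?thesis .
qed

definition truncated_above :: "(int \<Rightarrow> complex) \<Rightarrow> bool" where
  "truncated_above c \<longleftrightarrow> (\<exists>P. \<forall>p>P. c p = 0)"

definition mult_x :: "(int \<Rightarrow> complex) \<Rightarrow> int \<Rightarrow> complex" where
  "mult_x c = (\<lambda>p. c (p - 1))"

definition mult_x_minus :: "complex \<Rightarrow> (int \<Rightarrow> complex) \<Rightarrow> int \<Rightarrow> complex" where
  "mult_x_minus z c = (\<lambda>p. c (p - 1) - z * c p)"

text \<open>Coefficients of \<open>x^M (x - z)^N f(x)\<close>, where \<open>f(x) = \<Sum>\<^sub>p c p x^p\<close>.\<close>

primrec mult_denom :: "complex \<Rightarrow> nat \<Rightarrow> nat \<Rightarrow> (int \<Rightarrow> complex) \<Rightarrow> int \<Rightarrow> complex" where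
  "mult_denom z M 0 c = (\<lambda>p. c (p - int M))"
| "mult_denom z M (Suc N) c = mult_x_minus z (mult_denom z M N c)"

lemma finite_linear_form_mult_denom: "finite_linear_form (\<lambda>c. mult_denom z M N c k)"
proof (induction N arbitrary: k)
  case 0
  show ?case by (simp add: finite_linear_form_eval)
next
  case (Suc N)
  have "finite_linear_form (\<lambda>c. 1 * mult_denom z M N c (k - 1) + (- z) * mult_denom z M N c k)"
    by (intro finite_linear_form_lincomb Suc.IH)
  then show ?case by (simp add: mult_x_minus_def)
qed

lemmas mult_denom_lincomb = finite_linear_form_apply_lincomb[OF finite_linear_form_mult_denom]
lemmas mult_denom_sum = finite_linear_form_apply_sum[OF finite_linear_form_mult_denom]
lemmas mult_denom_zero [simp] = finite_linear_form_apply_zero[OF finite_linear_form_mult_denom]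

lemma mult_denom_diff: "mult_denom z M N (\<lambda>p. f p - g p) k = mult_denom z M N f k - mult_denom z M N g k"
  using mult_denom_lincomb[where a = 1 and b = "- 1"] by simp

lemma mult_denom_scale: "mult_denom z M N (\<lambda>p. a * f p) k = a * mult_denom z M N f k"
  using mult_denom_lincomb[where b = 0 and g = "\<lambda>_. 0"] by simp

lemma mult_denom_mult_x: "mult_denom z M N (mult_x c) = mult_x (mult_denom z M N c)"
  by (induction N) (auto simp: mult_x_def mult_x_minus_def fun_eq_iff diff_diff_eq add.commute)

lemma mult_denom_Suc_M: "mult_denom z (Suc M) N c = mult_x (mult_denom z M N c)"
  by (induction N) (auto simp: mult_x_def mult_x_minus_def algebra_simps)

lemma mult_denom_mult_x_minus: "mult_denom z M N (mult_x_minus z c) = mult_x_minus z (mult_denom z M N c)"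
  by (induction N) (auto simp: mult_x_minus_def fun_eq_iff diff_diff_eq add.commute)

lemma mult_denom_vanishes_above:
  "(\<And>p. p > P \<Longrightarrow> c p = 0) \<Longrightarrow> p > P + int M + int N \<Longrightarrow> mult_denom z M N c p = 0"
  by (induction N arbitrary: p) (auto simp: mult_x_minus_def)

lemma truncated_above_lincomb:
  assumes "truncated_above f" "truncated_above g"
  shows "truncated_above (\<lambda>p. a * f p + b * g p)"
proof -
  obtain P Q where "\<forall>p>P. f p = 0" "\<forall>p>Q. g p = 0"
    using assms unfolding truncated_above_def by blast
  then show ?thesis unfolding truncated_above_def by (intro exI[of _ "max P Q"]) auto
qed

lemma truncated_above_mult_denom: "truncated_above c \<Longrightarrow> truncated_above (mult_denom z M N c)"
  unfolding truncated_above_def using mult_denom_vanishes_above by blast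

lemma mult_x_minus_eq_0_imp:
  assumes "truncated_above c" "mult_x_minus z c = (\<lambda>_. 0)"
  shows "c = (\<lambda>_. 0)"
proof -
  obtain P where P: "\<And>p. p > P \<Longrightarrow> c p = 0"
    using assms(1) unfolding truncated_above_def by blast
  have vanish: "c p = 0" if "p > P - int n" for n p
    using that
  proof (induction n arbitrary: p)
    case (Suc n)
    then have "c (p + 1) = 0" by simp
    moreover have "mult_x_minus z c (p + 1) = 0" using assms(2) by simp
    ultimately show ?case by (simp add: mult_x_minus_def)
  qed (use P in simp)
  then have "c p = 0" for p
    using vanish[of "nat (P - p + 1)" p] by simp
  then show ?thesis by auto
qed

lemma mult_denom_eq_0_imp:
  "truncated_above c \<Longrightarrow> mult_denom z M N c = (\<lambda>_. 0) \<Longrightarrow> c = (\<lambda>_. 0)"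
proof (induction N)
  case 0
  then have "c (k + int M - int M) = 0" for k
    by (metis mult_denom.simps(1))
  then show ?case by auto
next
  case (Suc N)
  then show ?case
    using mult_x_minus_eq_0_imp truncated_above_mult_denom by simp
qed

lemma has_sum_mult_denom:
  fixes c :: "int \<Rightarrow> complex"
  assumes "x \<noteq> 0" and "((\<lambda>p. c p * x powi p) has_sum S) UNIV"
  shows "((\<lambda>p. mult_denom z M N c p * x powi p) has_sum (x^M * (x - z)^N * S)) UNIV"
proof (induction N)
  case 0
  show ?case using has_sum_powi_shift[OF assms, of "int M"] by simp
next
  case (Suc N)
  have "((\<lambda>p. mult_denom z M N c (p - 1) * x powi p - z * (mult_denom z M N c p * x powi p))
      has_sum (x powi 1 * (x^M * (x - z)^N * S) - z * (x^M * (x - z)^N * S))) UNIV"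
    by (intro has_sum_diff has_sum_powi_shift has_sum_cmult_right Suc assms(1))
  then show ?case by (simp add: mult_x_minus_def algebra_simps)
qed

definition poly_coeffs :: "complex poly \<Rightarrow> int \<Rightarrow> complex" where
  "poly_coeffs P k = (if 0 \<le> k then coeff P (nat k) else 0)"

lemma has_sum_poly_coeffs: "((\<lambda>k. poly_coeffs P k * x powi k) has_sum poly P x) UNIV"
proof (rule has_sum_finite_neutralI[where B = "int ` {..degree P}"])
  show "poly_coeffs P k * x powi k = 0" if "k \<in> UNIV - int ` {..degree P}" for k
  proof -
    have "k < 0 \<or> nat k > degree P"
      using that by (auto simp: image_iff) (metis atMost_iff int_nat_eq le_eq_less_or_eq linorder_not_less)
    then show ?thesis by (auto simp: poly_coeffs_def coeff_eq_0)
  qed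
  show "poly P x = (\<Sum>k\<in>int ` {..degree P}. poly_coeffs P k * x powi k)"
    by (simp add: sum.reindex poly_altdef poly_coeffs_def)
qed auto

lemma truncated_above_poly_coeffs: "truncated_above (poly_coeffs P)"
  unfolding truncated_above_def poly_coeffs_def
  by (rule exI[of _ "int (degree P)"]) (auto simp: coeff_eq_0)

lemma mult_denom_eq_poly_coeffs:
  fixes c :: "int \<Rightarrow> complex"
  assumes "truncated_above c"
    and sums: "\<And>x. norm z < norm x \<Longrightarrow> ((\<lambda>p. c p * x powi p) has_sum (poly P x / (x^M * (x - z)^N))) UNIV"
  shows "mult_denom z M N c = poly_coeffs P"
proof -
  obtain P1 P2 where "\<forall>p>P1. mult_denom z M N c p = 0" "\<forall>p>P2. poly_coeffs P p = 0"
    using truncated_above_mult_denom[OF assms(1)] truncated_above_poly_coeffs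
    unfolding truncated_above_def by metis
  then have "(\<lambda>k. mult_denom z M N c k - poly_coeffs P k) = (\<lambda>_. 0)"
  proof (intro laurent_zero_near_infinity[of "max P1 P2" _ "norm z"])
    fix x :: complex assume x: "norm z < norm x"
    then have "x \<noteq> 0" "x - z \<noteq> 0" by auto
    have "((\<lambda>p. mult_denom z M N c p * x powi p) has_sum (x^M * (x - z)^N * (poly P x / (x^M * (x - z)^N)))) UNIV"
      using \<open>x \<noteq> 0\<close> sums[OF x] by (rule has_sum_mult_denom)
    then have "((\<lambda>p. mult_denom z M N c p * x powi p) has_sum poly P x) UNIV"
      using \<open>x \<noteq> 0\<close> \<open>x - z \<noteq> 0\<close> by simp
    from has_sum_diff[OF this has_sum_poly_coeffs[of P x]]
    show "((\<lambda>p. (mult_denom z M N c p - poly_coeffs P p) * x powi p) has_sum 0) UNIV"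
      by (simp add: algebra_simps)
  qed auto
  then show ?thesis by (simp add: fun_eq_iff)
qed

text \<open>\<open>rational_series z M N c\<close>: the series \<open>\<Sum>\<^sub>p c p x^p\<close> is the expansion at infinity of
  \<open>P(x) / (x^M (x - z)^N)\<close> for a polynomial \<open>P\<close>, see \<open>rational_series_has_sum\<close>.\<close>

definition rational_series :: "complex \<Rightarrow> nat \<Rightarrow> nat \<Rightarrow> (int \<Rightarrow> complex) \<Rightarrow> bool" where
  "rational_series z M N c \<longleftrightarrow> truncated_above c \<and> (\<forall>k<0. mult_denom z M N c k = 0)"

definition is_rational_series :: "complex \<Rightarrow> (int \<Rightarrow> complex) \<Rightarrow> bool" where
  "is_rational_series z c \<longleftrightarrow> (\<exists>M N. rational_series z M N c)"

lemma rational_series_mult_denom_bound: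
  assumes "rational_series z M N c"
  obtains B where "\<And>k. k > B \<Longrightarrow> mult_denom z M N c k = 0"
  using assms truncated_above_mult_denom unfolding rational_series_def truncated_above_def by blast

definition numerator_poly :: "complex \<Rightarrow> nat \<Rightarrow> nat \<Rightarrow> (int \<Rightarrow> complex) \<Rightarrow> int \<Rightarrow> complex poly" where
  "numerator_poly z M N c B = (\<Sum>k\<in>{0..B}. monom (mult_denom z M N c k) (nat k))"

lemma poly_numerator_poly:
  "poly (numerator_poly z M N c B) x = (\<Sum>k\<in>{0..B}. mult_denom z M N c k * x powi k)"
  unfolding numerator_poly_def poly_sum poly_monom
  by (rule sum.cong) (auto simp: power_int_def)

lemma truncated_above_expansion_inf: "z \<noteq> 0 \<Longrightarrow> truncated_above (expansion_inf z M N k)"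
  using expansion_inf(1) unfolding truncated_above_def by blast

lemma mult_denom_expansion_inf:
  assumes "z \<noteq> 0" "0 \<le> k"
  shows "mult_denom z M N (expansion_inf z M N k) j = (if j = k then 1 else 0)"
proof -
  have "mult_denom z M N (expansion_inf z M N k) = poly_coeffs (monom 1 (nat k))"
  proof (rule mult_denom_eq_poly_coeffs[OF truncated_above_expansion_inf[OF assms(1)]])
    fix x :: complex assume "norm z < norm x"
    then have "((\<lambda>p. expansion_inf z M N k p * x powi p) has_sum (x powi k / (x^M * (x - z)^N))) UNIV"
      by (rule expansion_inf(2)[OF assms(1)])
    then show "((\<lambda>p. expansion_inf z M N k p * x powi p) has_sum (poly (monom 1 (nat k)) x / (x^M * (x - z)^N))) UNIV"
      using assms(2) by (simp add: poly_monom power_int_def)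
  qed
  then show ?thesis using assms(2) by (auto simp: poly_coeffs_def coeff_monom)
qed

text \<open>The series is the expansion at infinity of \<open>\<Sum>\<^sub>k d\<^sub>k x^k / (x^M (x - z)^N)\<close>,
  where \<open>d = mult_denom z M N c\<close>: both are truncated above and have the same image under
  the injective map \<open>mult_denom z M N\<close>.\<close>

lemma rational_series_has_sum:
  fixes c :: "int \<Rightarrow> complex"
  assumes "z \<noteq> 0" and c: "rational_series z M N c" and B: "\<And>k. k > B \<Longrightarrow> mult_denom z M N c k = 0"
    and x: "norm z < norm x"
  shows "((\<lambda>p. c p * x powi p) has_sum (poly (numerator_poly z M N c B) x / (x^M * (x - z)^N))) UNIV"
proof -
  define c' where "c' p = (\<Sum>k\<in>{0..B}. mult_denom z M N c k * expansion_inf z M N k p)" for p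
  have "((\<lambda>p. c' p * x powi p) has_sum
      (\<Sum>k\<in>{0..B}. mult_denom z M N c k * (x powi k / (x^M * (x - z)^N)))) UNIV"
    unfolding c'_def using x by (intro has_sum_powi_linear_combination expansion_inf(2)[OF \<open>z \<noteq> 0\<close>]) auto
  then have c'_sums: "((\<lambda>p. c' p * x powi p) has_sum (poly (numerator_poly z M N c B) x / (x^M * (x - z)^N))) UNIV"
    by (simp add: poly_numerator_poly sum_divide_distrib)
  have "c' p = 0" if "p > B - int M - int N" for p
    unfolding c'_def using that by (intro sum.neutral ballI) (simp add: expansion_inf(1)[OF \<open>z \<noteq> 0\<close>])
  then have "truncated_above (\<lambda>p. c p - c' p)"
    using c truncated_above_lincomb[of c c' 1 "- 1"] unfolding rational_series_def truncated_above_def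
    by (auto simp del: of_int_minus)
  moreover have "mult_denom z M N c' j = mult_denom z M N c j" for j
  proof -
    have "mult_denom z M N c' j = (\<Sum>k\<in>{0..B}. mult_denom z M N c k * mult_denom z M N (expansion_inf z M N k) j)"
      unfolding c'_def[abs_def] mult_denom_sum mult_denom_scale ..
    also have "\<dots> = (\<Sum>k\<in>{0..B}. if k = j then mult_denom z M N c j else 0)"
      by (rule sum.cong) (auto simp: mult_denom_expansion_inf[OF \<open>z \<noteq> 0\<close>])
    also have "\<dots> = mult_denom z M N c j"
      using c B by (auto simp: rational_series_def not_le)
    finally show ?thesis .
  qed
  then have "mult_denom z M N (\<lambda>p. c p - c' p) = (\<lambda>_. 0)"
    by (simp add: mult_denom_diff fun_eq_iff)
  ultimately have "(\<lambda>p. c p - c' p) = (\<lambda>_. 0)"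
    using mult_denom_eq_0_imp by blast
  then have "c = c'"
    by (auto simp: fun_eq_iff dest: fun_cong)
  then show ?thesis using c'_sums by simp
qed

lemma rational_series_zero [simp]: "rational_series z M N (\<lambda>_. 0)"
  by (simp add: rational_series_def truncated_above_def)

lemma rational_series_lincomb:
  "rational_series z M N c1 \<Longrightarrow> rational_series z M N c2 \<Longrightarrow> rational_series z M N (\<lambda>p. a * c1 p + b * c2 p)"
  unfolding rational_series_def by (simp add: mult_denom_lincomb truncated_above_lincomb)

lemma rational_series_sum:
  assumes "finite I" "\<And>i. i \<in> I \<Longrightarrow> rational_series z M N (f i)"
  shows "rational_series z M N (\<lambda>p. \<Sum>i\<in>I. f i p)"
  using assms
proof (induction I rule: finite_induct)
  case (insert i I)
  then show ?case using rational_series_lincomb[of z M N "f i" "\<lambda>p. \<Sum>i\<in>I. f i p" 1 1] by simp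
qed simp

lemma rational_series_finite_linear_form:
  assumes "finite_linear_form \<Phi>" "\<And>q. rational_series z M N (\<lambda>p. C p q)"
  shows "rational_series z M N (\<lambda>p. \<Phi> (C p))"
proof -
  obtain S w where S: "finite S" "\<And>c. \<Phi> c = (\<Sum>q\<in>S. w q * c q)"
    using assms(1) unfolding finite_linear_form_def by blast
  have "rational_series z M N (\<lambda>p. w q * C p q + 0 * C p q)" for q
    by (intro rational_series_lincomb assms(2))
  then show ?thesis
    unfolding S(2) by (intro rational_series_sum S(1)) simp
qed

lemma rational_series_mult_x: "rational_series z M N c \<Longrightarrow> rational_series z M N (mult_x c)"
  unfolding rational_series_def truncated_above_def mult_denom_mult_x
  by (auto simp: mult_x_def) (metis add.commute less_diff_eq)

lemma rational_series_mono:
  assumes "M \<le> M'" "N \<le> N'" "rational_series z M N c"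
  shows "rational_series z M' N' c"
proof -
  have "rational_series z (M + i) (N + j) c" for i j
  proof (induction j)
    case 0
    show ?case
      by (induction i) (use assms(3) in \<open>auto simp: rational_series_def mult_denom_Suc_M mult_x_def\<close>)
  next
    case (Suc j)
    then show ?case by (auto simp: rational_series_def mult_x_minus_def)
  qed
  then show ?thesis using assms(1,2) by (metis le_add_diff_inverse)
qed

lemma rational_series_of_mult_x:
  "truncated_above c \<Longrightarrow> rational_series z M N (mult_x c) \<Longrightarrow> rational_series z (Suc M) N c"
  unfolding rational_series_def by (simp add: mult_denom_Suc_M mult_denom_mult_x)

lemma rational_series_of_mult_x_minus:
  "truncated_above c \<Longrightarrow> rational_series z M N (mult_x_minus z c) \<Longrightarrow> rational_series z M (Suc N) c"
  unfolding rational_series_def by (simp add: mult_denom_mult_x_minus)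

lemma is_rational_series_common:
  assumes "is_rational_series z c1" "is_rational_series z c2"
  obtains M N where "rational_series z M N c1" "rational_series z M N c2"
proof -
  obtain M1 N1 M2 N2 where "rational_series z M1 N1 c1" "rational_series z M2 N2 c2"
    using assms unfolding is_rational_series_def by blast
  then have "rational_series z (max M1 M2) (max N1 N2) c1" "rational_series z (max M1 M2) (max N1 N2) c2"
    by (meson rational_series_mono max.cobounded1 max.cobounded2)+
  then show ?thesis by (rule that)
qed

lemma is_rational_series_zero [simp]: "is_rational_series z (\<lambda>_. 0)"
  unfolding is_rational_series_def by auto

lemma is_rational_series_lincomb:
  assumes "is_rational_series z c1" "is_rational_series z c2"
  shows "is_rational_series z (\<lambda>p. a * c1 p + b * c2 p)"
  using is_rational_series_common[OF assms] rational_series_lincomb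
  unfolding is_rational_series_def by metis

lemma is_rational_series_of_mult_x:
  "truncated_above c \<Longrightarrow> is_rational_series z (mult_x c) \<Longrightarrow> is_rational_series z c"
  unfolding is_rational_series_def by (auto intro: rational_series_of_mult_x)

lemma is_rational_series_of_mult_x_minus:
  "truncated_above c \<Longrightarrow> is_rational_series z (mult_x_minus z c) \<Longrightarrow> is_rational_series z c"
  unfolding is_rational_series_def by (auto intro: rational_series_of_mult_x_minus)

lemma is_rational_series_finite_linear_form:
  assumes "finite_linear_form \<Phi>" "\<And>q. is_rational_series z (\<lambda>p. C p q)"
  shows "is_rational_series z (\<lambda>p. \<Phi> (C p))"
proof -
  obtain S w where S: "finite S" "\<And>c. \<Phi> c = (\<Sum>q\<in>S. w q * c q)"
    using assms(1) unfolding finite_linear_form_def by blast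
  have "is_rational_series z (\<lambda>p. \<Sum>q\<in>Q. w q * C p q)" if "finite Q" for Q
    using that
  proof (induction Q rule: finite_induct)
    case (insert q Q)
    have "is_rational_series z (\<lambda>p. w q * C p q + 1 * (\<Sum>q\<in>Q. w q * C p q))"
      by (intro is_rational_series_lincomb assms(2) insert.IH)
    then show ?case using insert.hyps by simp
  qed simp
  then show ?thesis using S by simp
qed

lemma expR_eqI:
  fixes c d :: "int \<Rightarrow> complex"
  assumes "z \<noteq> 0"
    and c: "\<And>x. norm z < norm x \<Longrightarrow> ((\<lambda>p. c p * x powi p) has_sum (poly P x / (x^M * (x - z)^N))) UNIV"
    and d_below: "\<And>k. k < K \<Longrightarrow> d k = 0"
    and d: "\<And>x. 0 < norm x \<Longrightarrow> norm x < norm z \<Longrightarrow>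
      ((\<lambda>p. d p * x powi p) has_sum (poly P x / (x^M * (x - z)^N))) UNIV"
  shows "expR z c = d"
proof -
  have "d' = d"
    if c': "\<forall>x. norm z < norm x \<longrightarrow> ((\<lambda>p. c p * x powi p) has_sum (poly P' x / (x^M' * (x - z)^N'))) UNIV"
      and d'_below: "\<forall>k<K'. d' k = 0"
      and d': "\<forall>x. 0 < norm x \<and> norm x < norm z \<longrightarrow>
        ((\<lambda>p. d' p * x powi p) has_sum (poly P' x / (x^M' * (x - z)^N'))) UNIV"
    for d' P' M' N' K'
  proof (rule laurent_unique_near_0[where K = K' and K' = K and r = "norm z"])
    fix x :: complex assume x: "0 < norm x" "norm x < norm z"
    then have "poly P' x / (x^M' * (x - z)^N') = poly P x / (x^M * (x - z)^N)"
      using c c' by (intro rational_sum_unique) auto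
    moreover have "((\<lambda>p. d' p * x powi p) has_sum (poly P' x / (x^M' * (x - z)^N'))) UNIV"
      using d' x by simp
    ultimately show "((\<lambda>p. d' p * x powi p) has_sum (poly P x / (x^M * (x - z)^N))) UNIV"
      by simp
  qed (use assms d'_below in auto)
  then show ?thesis
    unfolding expR_def using c d_below d by (intro the_equality) blast+
qed

lemma expL_eqI:
  fixes c d :: "int \<Rightarrow> complex"
  assumes "z \<noteq> 0"
    and c: "\<And>x. norm z < norm x \<Longrightarrow> ((\<lambda>p. c p * x powi p) has_sum (poly P x / (x^M * (x - z)^N))) UNIV"
    and d_below: "\<And>k. k < K \<Longrightarrow> d k = 0"
    and d: "\<And>y. 0 < norm y \<Longrightarrow> norm y < norm z \<Longrightarrow>
      ((\<lambda>p. d p * y powi p) has_sum (poly P (y + z) / ((y + z)^M * y^N))) UNIV"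
  shows "expL z c = d"
proof -
  have "d' = d"
    if c': "\<forall>x. norm z < norm x \<longrightarrow> ((\<lambda>p. c p * x powi p) has_sum (poly P' x / (x^M' * (x - z)^N'))) UNIV"
      and d'_below: "\<forall>k<K'. d' k = 0"
      and d': "\<forall>y. 0 < norm y \<and> norm y < norm z \<longrightarrow>
        ((\<lambda>p. d' p * y powi p) has_sum (poly P' (y + z) / ((y + z)^M' * y^N'))) UNIV"
    for d' P' M' N' K'
  proof (rule laurent_unique_near_0[where K = K' and K' = K and r = "norm z"])
    fix y :: complex assume y: "0 < norm y" "norm y < norm z"
    then have "y + z \<noteq> 0" "y + z \<noteq> z" by (auto simp: add_eq_0_iff)
    then have "poly P' (y + z) / ((y + z)^M' * (y + z - z)^N') = poly P (y + z) / ((y + z)^M * (y + z - z)^N)"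
      using c c' by (intro rational_sum_unique) auto
    moreover have "((\<lambda>p. d' p * y powi p) has_sum (poly P' (y + z) / ((y + z)^M' * y^N'))) UNIV"
      using d' y by simp
    ultimately show "((\<lambda>p. d' p * y powi p) has_sum (poly P (y + z) / ((y + z)^M * y^N))) UNIV"
      by simp
  qed (use assms d'_below in auto)
  then show ?thesis
    unfolding expL_def using c d_below d by (intro the_equality) blast+
qed

lemma expR_formula:
  assumes "z \<noteq> 0" and c: "rational_series z M N c"
  shows "expR z c n = (\<Sum>k\<in>{0..n + int M}. mult_denom z M N c k * expansion_0 z M N k n)"
proof -
  obtain B where B: "\<And>k. k > B \<Longrightarrow> mult_denom z M N c k = 0"
    using rational_series_mult_denom_bound[OF c] by blast
  define d where "d n' = (\<Sum>k\<in>{0..B}. mult_denom z M N c k * expansion_0 z M N k n')" for n'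
  have "expR z c = d"
  proof (rule expR_eqI[OF \<open>z \<noteq> 0\<close> rational_series_has_sum[OF \<open>z \<noteq> 0\<close> c B]])
    show "d k = 0" if "k < - int M" for k
      unfolding d_def using that by (intro sum.neutral ballI) (simp add: expansion_0(1)[OF \<open>z \<noteq> 0\<close>])
    fix x :: complex assume "0 < norm x" "norm x < norm z"
    then have "((\<lambda>p. d p * x powi p) has_sum
        (\<Sum>k\<in>{0..B}. mult_denom z M N c k * (x powi k / (x^M * (x - z)^N)))) UNIV"
      unfolding d_def by (intro has_sum_powi_linear_combination expansion_0(2)[OF \<open>z \<noteq> 0\<close>]) auto
    then show "((\<lambda>p. d p * x powi p) has_sum (poly (numerator_poly z M N c B) x / (x^M * (x - z)^N))) UNIV"
      by (simp add: poly_numerator_poly sum_divide_distrib)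
  qed
  then have "expR z c n = (\<Sum>k\<in>{0..B}. mult_denom z M N c k * expansion_0 z M N k n)"
    by (simp add: d_def)
  also have "\<dots> = (\<Sum>k\<in>{0..max B (n + int M)}. mult_denom z M N c k * expansion_0 z M N k n)"
    by (rule sum.mono_neutral_left) (use B in auto)
  also have "\<dots> = (\<Sum>k\<in>{0..n + int M}. mult_denom z M N c k * expansion_0 z M N k n)"
    by (rule sum.mono_neutral_right) (use expansion_0(1)[OF \<open>z \<noteq> 0\<close>] in auto)
  finally show ?thesis .
qed

lemma expL_formula:
  assumes "z \<noteq> 0" and c: "rational_series z M N c" and B: "\<And>k. k > B \<Longrightarrow> mult_denom z M N c k = 0"
  shows "expL z c m = (\<Sum>k\<in>{0..B}. mult_denom z M N c k * expansion_z z M N k m)"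
proof -
  define d where "d m' = (\<Sum>k\<in>{0..B}. mult_denom z M N c k * expansion_z z M N k m')" for m'
  have "expL z c = d"
  proof (rule expL_eqI[OF \<open>z \<noteq> 0\<close> rational_series_has_sum[OF \<open>z \<noteq> 0\<close> c B]])
    show "d k = 0" if "k < - int N" for k
      unfolding d_def using that by (intro sum.neutral ballI) (simp add: expansion_z(1)[OF \<open>z \<noteq> 0\<close>])
    fix y :: complex assume "0 < norm y" "norm y < norm z"
    then have "((\<lambda>p. d p * y powi p) has_sum
        (\<Sum>k\<in>{0..B}. mult_denom z M N c k * ((y + z) powi k / ((y + z)^M * y^N)))) UNIV"
      unfolding d_def by (intro has_sum_powi_linear_combination expansion_z(2)[OF \<open>z \<noteq> 0\<close>]) auto
    then show "((\<lambda>p. d p * y powi p) has_sum (poly (numerator_poly z M N c B) (y + z) / ((y + z)^M * y^N))) UNIV"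
      by (simp add: poly_numerator_poly sum_divide_distrib)
  qed
  then show ?thesis by (simp add: d_def)
qed

lemma finite_linear_form_scale: "finite_linear_form \<Phi> \<Longrightarrow> finite_linear_form (\<lambda>c. \<Phi> c * a)"
  using finite_linear_form_lincomb[of \<Phi> \<Phi> a 0] by (simp add: mult.commute)

lemma expR_finite_linear_form:
  assumes "z \<noteq> 0"
  obtains \<Phi> where "finite_linear_form \<Phi>" "\<And>c. rational_series z M N c \<Longrightarrow> expR z c n = \<Phi> c"
proof
  show "finite_linear_form (\<lambda>c. \<Sum>k\<in>{0..n + int M}. mult_denom z M N c k * expansion_0 z M N k n)"
    by (intro finite_linear_form_sum finite_linear_form_scale finite_linear_form_mult_denom) simp
qed (rule expR_formula[OF assms])

lemma expL_finite_linear_form: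
  assumes "z \<noteq> 0"
  obtains \<Psi> where "finite_linear_form \<Psi>"
    "\<And>c. rational_series z M N c \<Longrightarrow> (\<And>p. p > P \<Longrightarrow> c p = 0) \<Longrightarrow> expL z c m = \<Psi> c"
proof
  show "finite_linear_form (\<lambda>c. \<Sum>k\<in>{0..P + int M + int N}. mult_denom z M N c k * expansion_z z M N k m)"
    by (intro finite_linear_form_sum finite_linear_form_scale finite_linear_form_mult_denom) simp
next
  fix c assume c: "rational_series z M N c" and above: "\<And>p. p > P \<Longrightarrow> c p = 0"
  show "expL z c m = (\<Sum>k\<in>{0..P + int M + int N}. mult_denom z M N c k * expansion_z z M N k m)"
    by (rule expL_formula[OF assms c mult_denom_vanishes_above[OF above]])
qed

lemma expR_lincomb:
  assumes "z \<noteq> 0" "rational_series z M N c1" "rational_series z M N c2"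
  shows "expR z (\<lambda>p. a * c1 p + b * c2 p) n = a * expR z c1 n + b * expR z c2 n"
proof -
  obtain \<Phi> where \<Phi>: "finite_linear_form \<Phi>" "\<And>c. rational_series z M N c \<Longrightarrow> expR z c n = \<Phi> c"
    using expR_finite_linear_form[OF assms(1)] by blast
  have "expR z (\<lambda>p. a * c1 p + b * c2 p) n = \<Phi> (\<lambda>p. a * c1 p + b * c2 p)"
    using assms by (intro \<Phi>(2) rational_series_lincomb)
  also have "\<dots> = a * expR z c1 n + b * expR z c2 n"
    using finite_linear_form_apply_lincomb[OF \<Phi>(1)] \<Phi>(2) assms by simp
  finally show ?thesis .
qed

lemma expL_lincomb:
  assumes "z \<noteq> 0" "rational_series z M N c1" "rational_series z M N c2"
  shows "expL z (\<lambda>p. a * c1 p + b * c2 p) m = a * expL z c1 m + b * expL z c2 m"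
proof -
  obtain P1 P2 where "\<forall>p>P1. c1 p = 0" "\<forall>p>P2. c2 p = 0"
    using assms(2,3) unfolding rational_series_def truncated_above_def by blast
  then have P: "\<And>p. p > max P1 P2 \<Longrightarrow> c1 p = 0" "\<And>p. p > max P1 P2 \<Longrightarrow> c2 p = 0"
    by simp_all
  obtain \<Psi> where \<Psi>: "finite_linear_form \<Psi>"
    "\<And>c. rational_series z M N c \<Longrightarrow> (\<And>p. p > max P1 P2 \<Longrightarrow> c p = 0) \<Longrightarrow> expL z c m = \<Psi> c"
    using expL_finite_linear_form[OF assms(1)] by blast
  have "expL z (\<lambda>p. a * c1 p + b * c2 p) m = \<Psi> (\<lambda>p. a * c1 p + b * c2 p)"
    using assms P by (intro \<Psi>(2) rational_series_lincomb) auto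
  also have "\<dots> = a * expL z c1 m + b * expL z c2 m"
    using finite_linear_form_apply_lincomb[OF \<Psi>(1)] \<Psi>(2) assms P by simp
  finally show ?thesis .
qed

lemma expR_zero [simp]: "z \<noteq> 0 \<Longrightarrow> expR z (\<lambda>_. 0) n = 0"
  using expR_formula[of z 0 0 "\<lambda>_. 0" n] by simp

lemma expL_zero [simp]: "z \<noteq> 0 \<Longrightarrow> expL z (\<lambda>_. 0) m = 0"
  using expL_formula[of z 0 0 "\<lambda>_. 0" 0 m] by simp

lemma expR_below: "z \<noteq> 0 \<Longrightarrow> rational_series z M N c \<Longrightarrow> n < - int M \<Longrightarrow> expR z c n = 0"
  by (simp add: expR_formula)

lemma expL_below:
  assumes "z \<noteq> 0" "rational_series z M N c" "m < - int N"
  shows "expL z c m = 0"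
proof -
  obtain B where "\<And>k. k > B \<Longrightarrow> mult_denom z M N c k = 0"
    using rational_series_mult_denom_bound[OF assms(2)] by blast
  then have "expL z c m = (\<Sum>k\<in>{0..B}. mult_denom z M N c k * expansion_z z M N k m)"
    by (rule expL_formula[OF assms(1,2)])
  also have "\<dots> = 0"
    using assms(3) by (simp add: expansion_z(1)[OF assms(1)])
  finally show ?thesis .
qed

lemma expR_mult_x:
  assumes "z \<noteq> 0" and c: "rational_series z M N c"
  shows "expR z (mult_x c) n = expR z c (n - 1)"
proof -
  have "expR z (mult_x c) n = (\<Sum>k\<in>{0..n + int M}. mult_denom z M N c (k - 1) * expansion_0 z M N k n)"
    unfolding expR_formula[OF assms(1) rational_series_mult_x[OF c]] mult_denom_mult_x by (simp add: mult_x_def)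
  also have "\<dots> = (\<Sum>j\<in>{-1..n + int M - 1}. mult_denom z M N c j * expansion_0 z M N (j + 1) n)"
    by (rule sum.reindex_bij_witness[of _ "\<lambda>j. j + 1" "\<lambda>k. k - 1"]) auto
  also have "\<dots> = (\<Sum>j\<in>{-1..n + int M - 1}. mult_denom z M N c j * expansion_0 z M N j (n - 1))"
    by (simp add: expansion_0_shift[OF assms(1)])
  also have "\<dots> = (\<Sum>j\<in>{0..n - 1 + int M}. mult_denom z M N c j * expansion_0 z M N j (n - 1))"
    using c by (intro sum.mono_neutral_right) (auto simp: rational_series_def)
  also have "\<dots> = expR z c (n - 1)"
    by (simp add: expR_formula[OF assms])
  finally show ?thesis .
qed

lemma expL_mult_x:
  assumes "z \<noteq> 0" and c: "rational_series z M N c"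
  shows "expL z (mult_x c) m = expL z c (m - 1) + z * expL z c m"
proof -
  obtain B where B: "\<And>k. k > B \<Longrightarrow> mult_denom z M N c k = 0"
    using rational_series_mult_denom_bound[OF c] by blast
  have B': "mult_denom z M N (mult_x c) k = 0" if "k > B + 1" for k
    unfolding mult_denom_mult_x using B that by (simp add: mult_x_def)
  have "expL z (mult_x c) m = (\<Sum>k\<in>{0..B + 1}. mult_denom z M N (mult_x c) k * expansion_z z M N k m)"
    by (rule expL_formula[OF assms(1) rational_series_mult_x[OF c] B'])
  also have "\<dots> = (\<Sum>k\<in>{0..B + 1}. mult_denom z M N c (k - 1) * expansion_z z M N k m)"
    unfolding mult_denom_mult_x by (simp add: mult_x_def)
  also have "\<dots> = (\<Sum>j\<in>{-1..B}. mult_denom z M N c j * expansion_z z M N (j + 1) m)"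
    by (rule sum.reindex_bij_witness[of _ "\<lambda>j. j + 1" "\<lambda>k. k - 1"]) auto
  also have "\<dots> = (\<Sum>j\<in>{0..B}. mult_denom z M N c j * expansion_z z M N (j + 1) m)"
    using c by (intro sum.mono_neutral_right) (auto simp: rational_series_def)
  also have "\<dots> = (\<Sum>j\<in>{0..B}. mult_denom z M N c j * expansion_z z M N j (m - 1))
      + z * (\<Sum>j\<in>{0..B}. mult_denom z M N c j * expansion_z z M N j m)"
    by (simp add: expansion_z_shift[OF assms(1)] sum.distrib sum_distrib_left algebra_simps)
  also have "\<dots> = expL z c (m - 1) + z * expL z c m"
    by (simp add: expL_formula[OF assms B])
  finally show ?thesis .
qed

section \<open>Iterated expansions of a double series\<close>

lemma int_induct_up:
  fixes Q :: "int \<Rightarrow> bool"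
  assumes base: "\<And>n. n < lo \<Longrightarrow> Q n" and step: "\<And>n. Q (n - 1) \<Longrightarrow> Q n"
  shows "Q k"
proof (cases "k < lo")
  case False
  then have "lo \<le> k" by simp
  then show ?thesis
  proof (induction k rule: int_ge_induct)
    case base
    then show ?case using step[of lo] assms(1)[of "lo - 1"] by simp
  next
    case (step i)
    then show ?case using assms(2)[of "i + 1"] by simp
  qed
qed (rule base)

lemma grid_vanishing:
  fixes H :: "int \<Rightarrow> int \<Rightarrow> complex"
  assumes step: "\<And>m n. n < nmax \<Longrightarrow> H (m - 1) n = 0 \<Longrightarrow> H m (n - 1) = 0 \<Longrightarrow> H m n = 0"
    and left: "\<And>m n. m < m0 \<Longrightarrow> n < nmax \<Longrightarrow> H m n = 0"
    and low: "\<And>m. \<exists>n0. \<forall>n<n0. H m n = 0"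
    and "n < nmax"
  shows "H m n = 0"
proof -
  have "\<forall>n<nmax. H m n = 0"
  proof (rule int_induct_up[where lo = m0 and Q = "\<lambda>m. \<forall>n<nmax. H m n = 0"])
    fix m :: int assume IH: "\<forall>n<nmax. H (m - 1) n = 0"
    obtain n0 where n0: "\<forall>n<n0. H m n = 0" using low by blast
    have "n < nmax \<longrightarrow> H m n = 0" for n
      by (rule int_induct_up[where lo = n0]) (use n0 IH step in auto)
    then show "\<forall>n<nmax. H m n = 0" by blast
  qed (use left in blast)
  then show ?thesis using \<open>n < nmax\<close> by blast
qed

text \<open>In the coordinates \<open>(y, x\<^sub>2)\<close> with \<open>y = x\<^sub>1 - z\<close>, the recursion is multiplication
  by \<open>y + z - x\<^sub>2 = x\<^sub>1 - x\<^sub>2\<close>; it has no nonzero solution supported in the union of two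
  opposite cones.\<close>

lemma recursion_solutions_eq:
  fixes L R :: "int \<Rightarrow> int \<Rightarrow> complex"
  assumes "z \<noteq> 0"
    and rec: "\<And>m n. L (m - 1) n + z * L m n - L m (n - 1) = R (m - 1) n + z * R m n - R m (n - 1)"
    and L_low: "\<And>m n. n < nmin \<Longrightarrow> L m n = 0" and L_left: "\<And>n. \<exists>m0. \<forall>m<m0. L m n = 0"
    and R_left: "\<And>m n. m < mmin \<Longrightarrow> R m n = 0" and R_low: "\<And>m. \<exists>n0. \<forall>n<n0. R m n = 0"
  shows "L m n = R m n"
proof -
  define H where "H m n = L m n - R m n" for m n
  have step: "H m n = 0" if "H (m - 1) n = 0" "H m (n - 1) = 0" for m n
    using rec[of m n] that \<open>z \<noteq> 0\<close> by (simp add: H_def algebra_simps)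
  have H_low: "H m n = 0" if "n < nmin" for m n
  proof (rule grid_vanishing[of nmin H mmin, OF step _ _ that])
    show "H m n = 0" if "m < mmin" "n < nmin" for m n
      using that L_low R_left by (simp add: H_def)
    fix m :: int
    obtain n0 where "\<forall>n<n0. R m n = 0" using R_low by blast
    then show "\<exists>n0. \<forall>n<n0. H m n = 0"
      using L_low by (intro exI[of _ "min n0 nmin"]) (simp add: H_def)
  qed
  define G where "G n m = H m n" for n m
  have "G n m = 0"
  proof (rule grid_vanishing[of "m + 1" G nmin])
    show "G n m = 0" if "G (n - 1) m = 0" "G n (m - 1) = 0" for n m
      using that step[of m n] by (simp add: G_def)
    show "G n m = 0" if "n < nmin" for n m
      using that H_low by (simp add: G_def)
    fix n :: int
    obtain m0 where "\<forall>m<m0. L m n = 0" using L_left by blast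
    then show "\<exists>m0. \<forall>m<m0. G n m = 0"
      using R_left by (intro exI[of _ "min m0 mmin"]) (simp add: G_def H_def)
  qed simp
  then show ?thesis by (simp add: G_def H_def)
qed

text \<open>\<open>cross_diff F\<close> is the coefficient array of \<open>(x\<^sub>1 - x\<^sub>2) \<Sum>\<^sub>p\<^sub>,\<^sub>q F p q x\<^sub>1^p x\<^sub>2^q\<close>.\<close>

definition cross_diff :: "(int \<Rightarrow> int \<Rightarrow> complex) \<Rightarrow> int \<Rightarrow> int \<Rightarrow> complex" where
  "cross_diff F p q = F (p - 1) q - F p (q - 1)"

lemma cross_diff_row: "cross_diff F p = (\<lambda>q. 1 * F (p - 1) q + (- 1) * mult_x (F p) q)"
  by (simp add: cross_diff_def mult_x_def fun_eq_iff)

lemma cross_diff_column: "(\<lambda>p. cross_diff F p q) = (\<lambda>p. 1 * mult_x (\<lambda>p. F p q) p + (- 1) * F p (q - 1))"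
  by (simp add: cross_diff_def mult_x_def fun_eq_iff)

lemma rational_rows_cross_diff_pow:
  "(\<And>p. rational_series z M N (F p)) \<Longrightarrow> rational_series z M N ((cross_diff ^^ K) F p)"
proof (induction K arbitrary: p)
  case (Suc K)
  have "\<And>p. rational_series z M N ((cross_diff ^^ K) F p)" by (rule Suc.IH[OF Suc.prems])
  then show ?case
    unfolding funpow.simps comp_def cross_diff_row[of "(cross_diff ^^ K) F"]
    by (intro rational_series_lincomb rational_series_mult_x)
qed simp

lemma rational_columns_cross_diff_pow:
  "(\<And>q. rational_series z M N (\<lambda>p. F p q)) \<Longrightarrow> rational_series z M N (\<lambda>p. (cross_diff ^^ K) F p q)"
proof (induction K arbitrary: q)
  case (Suc K)
  have "\<And>q. rational_series z M N (\<lambda>p. (cross_diff ^^ K) F p q)" by (rule Suc.IH[OF Suc.prems])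
  then show ?case
    unfolding funpow.simps comp_def cross_diff_column[of "(cross_diff ^^ K) F"]
    by (intro rational_series_lincomb rational_series_mult_x)
qed simp

lemma cross_diff_pow_vanishes_rows:
  "(\<And>p q. p > P \<Longrightarrow> F p q = 0) \<Longrightarrow> p > P + int K \<Longrightarrow> (cross_diff ^^ K) F p q = 0"
  by (induction K arbitrary: p q) (auto simp: cross_diff_def)

lemma expR_cross_diff:
  assumes "z \<noteq> 0" "\<And>p. rational_series z M N (F p)"
  shows "expR z (cross_diff F p) n = expR z (F (p - 1)) n - expR z (F p) (n - 1)"
proof -
  have "expR z (cross_diff F p) n = 1 * expR z (F (p - 1)) n + (- 1) * expR z (mult_x (F p)) n"
    unfolding cross_diff_row using assms by (intro expR_lincomb rational_series_mult_x)
  then show ?thesis by (simp add: expR_mult_x[OF assms(1,2)])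
qed

lemma expL_cross_diff:
  assumes "z \<noteq> 0" "\<And>q. rational_series z M N (\<lambda>p. F p q)"
  shows "expL z (\<lambda>p. cross_diff F p q) m
    = expL z (\<lambda>p. F p q) (m - 1) + z * expL z (\<lambda>p. F p q) m - expL z (\<lambda>p. F p (q - 1)) m"
proof -
  have "expL z (\<lambda>p. cross_diff F p q) m
      = 1 * expL z (mult_x (\<lambda>p. F p q)) m + (- 1) * expL z (\<lambda>p. F p (q - 1)) m"
    unfolding cross_diff_column using assms by (intro expL_lincomb rational_series_mult_x)
  then show ?thesis by (simp add: expL_mult_x[OF assms(1,2)])
qed

lemma expL_expR_swap:
  assumes "z \<noteq> 0"
    and rows: "\<And>p. rational_series z Mv Nv (C p)"
    and columns: "\<And>q. rational_series z Mu Nu (\<lambda>p. C p q)"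
    and vanish: "\<And>p q. p > P \<Longrightarrow> C p q = 0"
  shows "expL z (\<lambda>p. expR z (C p) n) m = expR z (\<lambda>q. expL z (\<lambda>p. C p q) m) n"
proof -
  obtain \<Phi> where \<Phi>: "finite_linear_form \<Phi>" "\<And>c. rational_series z Mv Nv c \<Longrightarrow> expR z c n = \<Phi> c"
    using expR_finite_linear_form[OF \<open>z \<noteq> 0\<close>] by blast
  obtain \<Psi> where \<Psi>: "finite_linear_form \<Psi>"
    "\<And>c. rational_series z Mu Nu c \<Longrightarrow> (\<And>p. p > P \<Longrightarrow> c p = 0) \<Longrightarrow> expL z c m = \<Psi> c"
    using expL_finite_linear_form[OF \<open>z \<noteq> 0\<close>] by blast
  have "C p = (\<lambda>_. 0)" if "p > P" for p
    using vanish that by auto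
  then have "\<Phi> (C p) = 0" if "p > P" for p
    using that finite_linear_form_apply_zero[OF \<Phi>(1)] by simp
  then have "expL z (\<lambda>p. expR z (C p) n) m = \<Psi> (\<lambda>p. \<Phi> (C p))"
    using rows columns by (simp add: \<Phi>(2) \<Psi>(2) rational_series_finite_linear_form[OF \<Phi>(1)])
  also have "\<dots> = \<Phi> (\<lambda>q. \<Psi> (\<lambda>p. C p q))"
    by (rule finite_linear_form_swap[OF \<Phi>(1) \<Psi>(1), symmetric])
  also have "\<dots> = expR z (\<lambda>q. expL z (\<lambda>p. C p q) m) n"
    using rows columns vanish
    by (simp add: \<Phi>(2) \<Psi>(2) rational_series_finite_linear_form[OF \<Psi>(1), where C = "\<lambda>q p. C p q"])
  finally show ?thesis .
qed

text \<open>Division by \<open>x\<close> and by \<open>x - z\<close> keeps a truncated series rational, so rationality propagates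
  upwards through families related by these factors.\<close>

lemma is_rational_series_family_mult_x:
  fixes c :: "int \<Rightarrow> int \<Rightarrow> complex"
  assumes "\<And>n. truncated_above (c n)" "\<And>n. n < lo \<Longrightarrow> c n = (\<lambda>_. 0)"
    and "\<And>n. is_rational_series z (\<lambda>p. c n (p - 1) - c (n - 1) p)"
  shows "is_rational_series z (c n)"
proof (induction n rule: int_induct_up[where lo = lo])
  case (2 n)
  have "mult_x (c n) = (\<lambda>p. 1 * (c n (p - 1) - c (n - 1) p) + 1 * c (n - 1) p)"
    by (simp add: mult_x_def)
  then have "is_rational_series z (mult_x (c n))"
    by (simp only:) (intro is_rational_series_lincomb assms(3) 2)
  then show ?case by (rule is_rational_series_of_mult_x[OF assms(1)])
qed (use assms(2) in simp)

lemma is_rational_series_family_mult_x_minus: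
  fixes c :: "int \<Rightarrow> int \<Rightarrow> complex"
  assumes "\<And>m. truncated_above (c m)" "\<And>m. m < lo \<Longrightarrow> c m = (\<lambda>_. 0)"
    and "\<And>m. is_rational_series z (\<lambda>q. c (m - 1) q + z * c m q - c m (q - 1))"
  shows "is_rational_series z (c m)"
proof (induction m rule: int_induct_up[where lo = lo])
  case (2 m)
  have "mult_x_minus z (c m) = (\<lambda>q. 1 * c (m - 1) q + (- 1) * (c (m - 1) q + z * c m q - c m (q - 1)))"
    by (simp add: mult_x_minus_def fun_eq_iff algebra_simps)
  then have "is_rational_series z (mult_x_minus z (c m))"
    by (simp only:) (intro is_rational_series_lincomb assms(3) 2)
  then show ?case by (rule is_rational_series_of_mult_x_minus[OF assms(1)])
qed (use assms(2) in simp)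

lemma is_rational_series_expR_columns:
  assumes "z \<noteq> 0"
    and rows: "\<And>p. rational_series z M N (A p)"
    and vanish: "\<And>p q. p > P \<Longrightarrow> A p q = 0"
    and columns: "\<And>q. is_rational_series z (\<lambda>p. (cross_diff ^^ K) A p q)"
  shows "is_rational_series z (\<lambda>p. expR z (A p) n)"
  using rows vanish columns
proof (induction K arbitrary: A P n)
  case 0
  obtain \<Phi> where \<Phi>: "finite_linear_form \<Phi>" "\<And>c. rational_series z M N c \<Longrightarrow> expR z c n = \<Phi> c"
    using expR_finite_linear_form[OF \<open>z \<noteq> 0\<close>] by blast
  have "is_rational_series z (\<lambda>p. \<Phi> (A p))"
    using 0 by (intro is_rational_series_finite_linear_form[OF \<Phi>(1)]) simp
  then show ?case using 0 by (simp add: \<Phi>(2))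
next
  case (Suc K)
  have "is_rational_series z (\<lambda>p. expR z (cross_diff A p) n)" for n
  proof (rule Suc.IH)
    show "rational_series z M N (cross_diff A p)" for p
      using rational_rows_cross_diff_pow[of z M N A 1] Suc.prems(1) by simp
    show "cross_diff A p q = 0" if "p > P + 1" for p q
      using Suc.prems(2) that by (simp add: cross_diff_def)
    show "is_rational_series z (\<lambda>p. (cross_diff ^^ K) (cross_diff A) p q)" for q
      using Suc.prems(3) by (simp add: funpow_swap1)
  qed
  then have IH: "is_rational_series z (\<lambda>p. expR z (A (p - 1)) n - expR z (A p) (n - 1))" for n
    by (simp add: expR_cross_diff[OF \<open>z \<noteq> 0\<close> Suc.prems(1)])
  define col where "col n = (\<lambda>p. expR z (A p) n)" for n
  have "is_rational_series z (col n)"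
  proof (rule is_rational_series_family_mult_x[where lo = "- int M"])
    have "A p = (\<lambda>_. 0)" if "p > P" for p
      using Suc.prems(2) that by auto
    then show "truncated_above (col n)" for n
      unfolding truncated_above_def col_def using \<open>z \<noteq> 0\<close> by (intro exI[of _ P] allI impI) simp
    show "col n = (\<lambda>_. 0)" if "n < - int M" for n
      using expR_below[OF \<open>z \<noteq> 0\<close> Suc.prems(1) that] by (simp add: col_def)
    show "is_rational_series z (\<lambda>p. col n (p - 1) - col (n - 1) p)" for n
      using IH by (simp add: col_def)
  qed
  then show ?case by (simp add: col_def)
qed

lemma is_rational_series_expL_rows:
  assumes "z \<noteq> 0"
    and columns: "\<And>q. rational_series z M N (\<lambda>p. B p q)"
    and vanish: "\<And>p q. q > Q \<Longrightarrow> B p q = 0"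
    and rows: "\<And>p. is_rational_series z ((cross_diff ^^ K) B p)"
    and bound: "\<And>p q. p > P \<Longrightarrow> (cross_diff ^^ K) B p q = 0"
  shows "is_rational_series z (\<lambda>q. expL z (\<lambda>p. B p q) m)"
  using columns vanish rows bound
proof (induction K arbitrary: B Q m)
  case 0
  obtain \<Psi> where \<Psi>: "finite_linear_form \<Psi>"
    "\<And>c. rational_series z M N c \<Longrightarrow> (\<And>p. p > P \<Longrightarrow> c p = 0) \<Longrightarrow> expL z c m = \<Psi> c"
    using expL_finite_linear_form[OF \<open>z \<noteq> 0\<close>] by blast
  have "is_rational_series z (\<lambda>q. \<Psi> (\<lambda>p. B p q))"
    using 0 by (intro is_rational_series_finite_linear_form[OF \<Psi>(1), where C = "\<lambda>q p. B p q"]) simp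
  then show ?case using 0 by (simp add: \<Psi>(2))
next
  case (Suc K)
  have "is_rational_series z (\<lambda>q. expL z (\<lambda>p. cross_diff B p q) m)" for m
  proof (rule Suc.IH)
    show "rational_series z M N (\<lambda>p. cross_diff B p q)" for q
      using rational_columns_cross_diff_pow[of z M N B 1] Suc.prems(1) by simp
    show "cross_diff B p q = 0" if "q > Q + 1" for p q
      using Suc.prems(2) that by (simp add: cross_diff_def)
    show "is_rational_series z ((cross_diff ^^ K) (cross_diff B) p)" for p
      using Suc.prems(3) by (simp add: funpow_swap1)
    show "(cross_diff ^^ K) (cross_diff B) p q = 0" if "p > P" for p q
      using Suc.prems(4) that by (simp add: funpow_swap1)
  qed
  then have IH: "is_rational_series z (\<lambda>q. expL z (\<lambda>p. B p q) (m - 1) + z * expL z (\<lambda>p. B p q) m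
      - expL z (\<lambda>p. B p (q - 1)) m)" for m
    by (simp add: expL_cross_diff[OF \<open>z \<noteq> 0\<close> Suc.prems(1)])
  define row where "row m = (\<lambda>q. expL z (\<lambda>p. B p q) m)" for m
  have "is_rational_series z (row m)"
  proof (rule is_rational_series_family_mult_x_minus[where lo = "- int N"])
    show "truncated_above (row m)" for m
      unfolding truncated_above_def row_def using Suc.prems(2) \<open>z \<noteq> 0\<close>
      by (intro exI[of _ Q] allI impI) simp
    show "row m = (\<lambda>_. 0)" if "m < - int N" for m
      using expL_below[OF \<open>z \<noteq> 0\<close> Suc.prems(1) that] by (simp add: row_def)
    show "is_rational_series z (\<lambda>q. row (m - 1) q + z * row m q - row m (q - 1))" for m
      using IH by (simp add: row_def)
  qed
  then show ?case by (simp add: row_def)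
qed

lemma expL_expR_cross_diff:
  assumes "z \<noteq> 0" and rows: "\<And>p. rational_series z M N (A p)"
    and columns: "\<And>n. is_rational_series z (\<lambda>p. expR z (A p) n)"
  shows "expL z (\<lambda>p. expR z (cross_diff A p) n) m
    = expL z (\<lambda>p. expR z (A p) n) (m - 1) + z * expL z (\<lambda>p. expR z (A p) n) m
      - expL z (\<lambda>p. expR z (A p) (n - 1)) m"
proof -
  let ?col = "\<lambda>n p. expR z (A p) n"
  obtain M' N' where MN: "rational_series z M' N' (?col n)" "rational_series z M' N' (?col (n - 1))"
    using is_rational_series_common[OF columns columns] by blast
  have "expL z (\<lambda>p. expR z (cross_diff A p) n) m
      = expL z (\<lambda>p. 1 * mult_x (?col n) p + (- 1) * ?col (n - 1) p) m"
    by (simp add: expR_cross_diff[OF \<open>z \<noteq> 0\<close> rows] mult_x_def)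
  also have "\<dots> = 1 * expL z (mult_x (?col n)) m + (- 1) * expL z (?col (n - 1)) m"
    by (rule expL_lincomb[OF \<open>z \<noteq> 0\<close> rational_series_mult_x[OF MN(1)] MN(2)])
  finally show ?thesis
    by (simp add: expL_mult_x[OF \<open>z \<noteq> 0\<close> MN(1)])
qed

lemma expR_expL_cross_diff:
  assumes "z \<noteq> 0" and columns: "\<And>q. rational_series z M N (\<lambda>p. B p q)"
    and rows: "\<And>m. is_rational_series z (\<lambda>q. expL z (\<lambda>p. B p q) m)"
  shows "expR z (\<lambda>q. expL z (\<lambda>p. cross_diff B p q) m) n
    = expR z (\<lambda>q. expL z (\<lambda>p. B p q) (m - 1)) n + z * expR z (\<lambda>q. expL z (\<lambda>p. B p q) m) n
      - expR z (\<lambda>q. expL z (\<lambda>p. B p q) m) (n - 1)"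
proof -
  let ?row = "\<lambda>m q. expL z (\<lambda>p. B p q) m"
  obtain M' N' where MN: "rational_series z M' N' (?row (m - 1))" "rational_series z M' N' (?row m)"
    using is_rational_series_common[OF rows rows] by blast
  have "expR z (\<lambda>q. expL z (\<lambda>p. cross_diff B p q) m) n
      = expR z (\<lambda>q. 1 * (1 * ?row (m - 1) q + z * ?row m q) + (- 1) * mult_x (?row m) q) n"
    by (simp add: expL_cross_diff[OF \<open>z \<noteq> 0\<close> columns] mult_x_def)
  also have "\<dots> = 1 * expR z (\<lambda>q. 1 * ?row (m - 1) q + z * ?row m q) n + (- 1) * expR z (mult_x (?row m)) n"
    by (rule expR_lincomb[OF \<open>z \<noteq> 0\<close> rational_series_lincomb[OF MN] rational_series_mult_x[OF MN(2)]])
  finally show ?thesis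
    unfolding expR_lincomb[OF \<open>z \<noteq> 0\<close> MN] expR_mult_x[OF \<open>z \<noteq> 0\<close> MN(2)] by simp
qed

lemma expL_expR_commute_step:
  assumes "z \<noteq> 0"
    and A_rows: "\<And>p. rational_series z Mv Nv (A p)"
    and columns: "\<And>n. is_rational_series z (\<lambda>p. expR z (A p) n)"
    and B_columns: "\<And>q. rational_series z Mu Nu (\<lambda>p. B p q)"
    and rows: "\<And>m. is_rational_series z (\<lambda>q. expL z (\<lambda>p. B p q) m)"
    and cross_diff_eq: "\<And>m n. expL z (\<lambda>p. expR z (cross_diff A p) n) m
      = expR z (\<lambda>q. expL z (\<lambda>p. cross_diff B p q) m) n"
  shows "expL z (\<lambda>p. expR z (A p) n) m = expR z (\<lambda>q. expL z (\<lambda>p. B p q) m) n"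
proof (rule recursion_solutions_eq[OF \<open>z \<noteq> 0\<close>, where nmin = "- int Mv" and mmin = "- int Nu"])
  fix m n :: int
  show "expL z (\<lambda>p. expR z (A p) n) (m - 1) + z * expL z (\<lambda>p. expR z (A p) n) m
      - expL z (\<lambda>p. expR z (A p) (n - 1)) m
    = expR z (\<lambda>q. expL z (\<lambda>p. B p q) (m - 1)) n + z * expR z (\<lambda>q. expL z (\<lambda>p. B p q) m) n
      - expR z (\<lambda>q. expL z (\<lambda>p. B p q) m) (n - 1)"
    using cross_diff_eq expL_expR_cross_diff[OF \<open>z \<noteq> 0\<close> A_rows columns]
      expR_expL_cross_diff[OF \<open>z \<noteq> 0\<close> B_columns rows] by simp
  show "expL z (\<lambda>p. expR z (A p) n) m = 0" if "n < - int Mv"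
    using expR_below[OF \<open>z \<noteq> 0\<close> A_rows that] \<open>z \<noteq> 0\<close> by simp
  show "expR z (\<lambda>q. expL z (\<lambda>p. B p q) m) n = 0" if "m < - int Nu"
    using expL_below[OF \<open>z \<noteq> 0\<close> B_columns that] \<open>z \<noteq> 0\<close> by simp
next
  fix n :: int
  obtain M N where "rational_series z M N (\<lambda>p. expR z (A p) n)"
    using columns unfolding is_rational_series_def by blast
  then show "\<exists>m0. \<forall>m<m0. expL z (\<lambda>p. expR z (A p) n) m = 0"
    using expL_below[OF \<open>z \<noteq> 0\<close>] by blast
next
  fix m :: int
  obtain M N where "rational_series z M N (\<lambda>q. expL z (\<lambda>p. B p q) m)"
    using rows unfolding is_rational_series_def by blast
  then show "\<exists>n0. \<forall>n<n0. expR z (\<lambda>q. expL z (\<lambda>p. B p q) m) n = 0"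
    using expR_below[OF \<open>z \<noteq> 0\<close>] by blast
qed

theorem expL_expR_commute:
  assumes "z \<noteq> 0"
    and "\<And>p. rational_series z Mv Nv (A p)" "\<And>p q. p > P \<Longrightarrow> A p q = 0"
    and "\<And>q. rational_series z Mu Nu (\<lambda>p. B p q)" "\<And>p q. q > Q \<Longrightarrow> B p q = 0"
    and "(cross_diff ^^ K) A = (cross_diff ^^ K) B"
  shows "expL z (\<lambda>p. expR z (A p) n) m = expR z (\<lambda>q. expL z (\<lambda>p. B p q) m) n"
  using assms(2-)
proof (induction K arbitrary: A B P Q m n)
  case 0
  then show ?case using expL_expR_swap[OF \<open>z \<noteq> 0\<close>, of Mv Nv A Mu Nu P] by simp
next
  case (Suc K)
  note A_rows = Suc.prems(1) and A_vanish = Suc.prems(2)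
    and B_columns = Suc.prems(3) and B_vanish = Suc.prems(4)
  have columns: "is_rational_series z (\<lambda>p. expR z (A p) n)" for n
  proof (rule is_rational_series_expR_columns[OF \<open>z \<noteq> 0\<close> A_rows A_vanish])
    show "is_rational_series z (\<lambda>p. (cross_diff ^^ Suc K) A p q)" for q
      unfolding Suc.prems(5) is_rational_series_def
      using rational_columns_cross_diff_pow[where F = B, OF B_columns] by blast
  qed
  have rows: "is_rational_series z (\<lambda>q. expL z (\<lambda>p. B p q) m)" for m
  proof (rule is_rational_series_expL_rows[OF \<open>z \<noteq> 0\<close> B_columns B_vanish])
    show "is_rational_series z ((cross_diff ^^ Suc K) B p)" for p
      unfolding Suc.prems(5)[symmetric] is_rational_series_def
      using rational_rows_cross_diff_pow[where F = A, OF A_rows] by blast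
    show "(cross_diff ^^ Suc K) B p q = 0" if "p > P + int (Suc K)" for p q
      unfolding Suc.prems(5)[symmetric] using cross_diff_pow_vanishes_rows[OF A_vanish that] .
  qed
  have IH: "expL z (\<lambda>p. expR z (cross_diff A p) n) m = expR z (\<lambda>q. expL z (\<lambda>p. cross_diff B p q) m) n"
    for m n
  proof (rule Suc.IH)
    show "rational_series z Mv Nv (cross_diff A p)" for p
      using rational_rows_cross_diff_pow[where F = A and K = 1, OF A_rows] by simp
    show "rational_series z Mu Nu (\<lambda>p. cross_diff B p q)" for q
      using rational_columns_cross_diff_pow[where F = B and K = 1, OF B_columns] by simp
    show "cross_diff A p q = 0" if "p > P + 1" for p q
      using A_vanish that by (simp add: cross_diff_def)
    show "cross_diff B p q = 0" if "q > Q + 1" for p q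
      using B_vanish that by (simp add: cross_diff_def)
    show "(cross_diff ^^ K) (cross_diff A) = (cross_diff ^^ K) (cross_diff B)"
      using Suc.prems(5) by (simp add: funpow_swap1)
  qed
  show ?case
    by (rule expL_expR_commute_step[OF \<open>z \<noteq> 0\<close> A_rows columns B_columns rows IH])
qed

section \<open>Locality of opposite vertex operators\<close>

lemma linear_map_0: "Vector_Spaces.linear s1 s2 f \<Longrightarrow> f 0 = 0"
  using linear_iff_module_hom module_hom.zero by metis

lemma linear_map_diff: "Vector_Spaces.linear s1 s2 f \<Longrightarrow> f (a - b) = f a - f b"
  using linear_iff_module_hom module_hom.diff by metis

lemma linear_map_scale: "Vector_Spaces.linear s1 s2 f \<Longrightarrow> f (s1 r x) = s2 r (f x)"
  using linear_iff_module_hom module_hom.scale by metis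

lemma linear_map_sum: "Vector_Spaces.linear s1 s2 f \<Longrightarrow> f (sum g S) = (\<Sum>a\<in>S. f (g a))"
  using linear_iff_module_hom module_hom.sum by metis

lemma cross_diff_pow_eq:
  "(cross_diff ^^ K) F p q = (\<Sum>i\<le>K. (- 1) ^ i * of_nat (K choose i) * F (p - int (K - i)) (q - int i))"
proof (induction K arbitrary: p q)
  case 0
  then show ?case by simp
next
  case (Suc K)
  let ?t = "\<lambda>c i. (- 1) ^ i * of_nat c * F (p - int (Suc K - i)) (q - int i)"
  have pascal: "(Suc K choose i) = (K choose i) + (if i = 0 then 0 else K choose (i - 1))" for i
    by (cases i) auto
  have "(\<Sum>i\<le>Suc K. ?t (Suc K choose i) i)
      = (\<Sum>i\<le>Suc K. ?t (K choose i) i) + (\<Sum>i\<le>Suc K. ?t (if i = 0 then 0 else K choose (i - 1)) i)"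
    by (simp only: pascal of_nat_add distrib_left distrib_right sum.distrib)
  also have "(\<Sum>i\<le>Suc K. ?t (K choose i) i) = (cross_diff ^^ K) F (p - 1) q"
    unfolding Suc.IH by (simp add: sum.atMost_Suc of_nat_diff algebra_simps)
  also have "(\<Sum>i\<le>Suc K. ?t (if i = 0 then 0 else K choose (i - 1)) i) = - (cross_diff ^^ K) F p (q - 1)"
    unfolding Suc.IH by (subst sum.atMost_Suc_shift) (simp add: sum_negf[symmetric] algebra_simps)
  finally show ?case
    unfolding funpow.simps comp_def cross_diff_def[of "(cross_diff ^^ K) F"] by simp
qed

text \<open>The component of the Jacobi identity with \<open>l = K\<close>, once \<open>a\<^sub>k b = 0\<close> for \<open>k \<ge> K\<close>.\<close>

lemma jacobi_commutator_vanishes: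
  fixes sW :: "complex \<Rightarrow> 'w::ab_group_add \<Rightarrow> 'w"
  assumes "vector_space sW"
    and lin: "\<And>n w. Vector_Spaces.linear sV sW (\<lambda>u. YW u n w)"
    and jacobi: "jacobi_identity sW Y YW"
    and trunc: "\<And>i::nat. Y a (int K + int i) b = 0"
  shows "(\<Sum>i\<le>K. sW ((- 1) ^ i * of_nat (K choose i))
           (YW a (int K + m - int i) (YW b (n + int i) w)
            - sW ((- 1) ^ K) (YW b (int K + n - int i) (YW a (m + int i) w)))) = 0"
proof -
  interpret W: vector_space sW by fact
  let ?t = "\<lambda>i. sW ((- 1) ^ i * ((of_int (int K) :: complex) gchoose i))
      (YW a (int K + m - int i) (YW b (n + int i) w)
       - sW ((- 1::complex) powi (int K)) (YW b (int K + n - int i) (YW a (m + int i) w)))"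
  have "Sum_any ?t = Sum_any (\<lambda>i::nat. sW ((of_int m :: complex) gchoose i) (YW (Y a (int K + int i) b) (m + n - int i) w))"
    using jacobi unfolding jacobi_identity_def by metis
  also have "\<dots> = 0"
    using trunc linear_map_0[OF lin] by simp
  finally have "Sum_any ?t = 0" .
  moreover have "{i. ?t i \<noteq> 0} \<subseteq> {..K}"
  proof
    fix i assume "i \<in> {i. ?t i \<noteq> 0}"
    then have "(of_nat (K choose i) :: complex) \<noteq> 0" by (auto simp: binomial_gbinomial)
    then show "i \<in> {..K}" by (auto simp: binomial_eq_0_iff)
  qed
  ultimately have "(\<Sum>i\<le>K. ?t i) = 0"
    using Sum_any.expand_superset[of "{..K}" ?t] by simp
  then show ?thesis by (simp add: binomial_gbinomial)
qed

lemma cross_diff_pow_eq_reflected: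
  "(cross_diff ^^ K) F p q
    = (- 1) ^ K * (\<Sum>i\<le>K. (- 1) ^ i * of_nat (K choose i) * F (p - int i) (q - int K + int i))"
proof -
  have "(cross_diff ^^ K) F p q
      = (\<Sum>i\<le>K. (- 1) ^ (K - i) * of_nat (K choose (K - i)) * F (p - int (K - (K - i))) (q - int (K - i)))"
    unfolding cross_diff_pow_eq by (subst sum.atLeastAtMost_rev[of _ 0 K, simplified atLeast0AtMost]) simp
  also have "\<dots> = (\<Sum>i\<le>K. (- 1) ^ K * ((- 1) ^ i * of_nat (K choose i) * F (p - int i) (q - int K + int i)))"
  proof (rule sum.cong)
    fix i assume "i \<in> {..K}"
    then have "(- 1 :: complex) ^ (K - i) = (- 1) ^ K * (- 1) ^ i" "K choose (K - i) = K choose i"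
      "K - (K - i) = i" "int (K - i) = int K - int i"
      by (auto simp: power_diff_conv_inverse binomial_symmetric[symmetric] of_nat_diff)
    then show "(- 1) ^ (K - i) * of_nat (K choose (K - i)) * F (p - int (K - (K - i))) (q - int (K - i))
        = (- 1) ^ K * ((- 1) ^ i * of_nat (K choose i) * F (p - int i) (q - int K + int i))"
      by (simp add: algebra_simps)
  qed simp
  finally show ?thesis by (simp add: sum_distrib_left)
qed

lemma jacobi_mode_locality:
  fixes sW :: "complex \<Rightarrow> 'w::ab_group_add \<Rightarrow> 'w"
  assumes "vector_space sW"
    and "\<And>n w. Vector_Spaces.linear sV sW (\<lambda>u. YW u n w)"
    and "jacobi_identity sW Y YW"
    and \<alpha>: "Vector_Spaces.linear sW (*) \<alpha>"
    and "\<And>i::nat. Y a (int K + int i) b = 0"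
  shows "(cross_diff ^^ K) (\<lambda>p q. \<alpha> (YW a p (YW b q w))) = (cross_diff ^^ K) (\<lambda>p q. \<alpha> (YW b q (YW a p w)))"
proof (intro ext)
  fix p q :: int
  define m where "m = p - int K"
  define n where "n = q - int K"
  let ?c = "\<lambda>i. (- 1) ^ i * of_nat (K choose i) :: complex"
  have "\<alpha> (\<Sum>i\<le>K. sW (?c i) (YW a (int K + m - int i) (YW b (n + int i) w)
      - sW ((- 1) ^ K) (YW b (int K + n - int i) (YW a (m + int i) w)))) = 0"
    using jacobi_commutator_vanishes[OF assms(1-3,5)] linear_map_0[OF \<alpha>] by simp
  then have "(\<Sum>i\<le>K. ?c i * \<alpha> (YW a (int K + m - int i) (YW b (n + int i) w)))
      = (- 1) ^ K * (\<Sum>i\<le>K. ?c i * \<alpha> (YW b (int K + n - int i) (YW a (m + int i) w)))"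
    by (simp add: linear_map_sum[OF \<alpha>] linear_map_scale[OF \<alpha>] linear_map_diff[OF \<alpha>]
        sum_subtractf sum_distrib_left algebra_simps)
  moreover have "(\<Sum>i\<le>K. ?c i * \<alpha> (YW a (int K + m - int i) (YW b (n + int i) w)))
      = (- 1) ^ K * (cross_diff ^^ K) (\<lambda>p q. \<alpha> (YW a p (YW b q w))) p q"
    unfolding cross_diff_pow_eq_reflected
    by (simp add: m_def n_def power_mult_distrib[symmetric] algebra_simps)
  moreover have "(\<Sum>i\<le>K. ?c i * \<alpha> (YW b (int K + n - int i) (YW a (m + int i) w)))
      = (cross_diff ^^ K) (\<lambda>p q. \<alpha> (YW b q (YW a p w))) p q"
    unfolding cross_diff_pow_eq by (rule sum.cong) (auto simp: m_def n_def algebra_simps)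
  ultimately show "(cross_diff ^^ K) (\<lambda>p q. \<alpha> (YW a p (YW b q w))) p q
      = (cross_diff ^^ K) (\<lambda>p q. \<alpha> (YW b q (YW a p w))) p q"
    by simp
qed

lemma VOA_vector_space: "is_VOA sV Y vac om c \<Longrightarrow> vector_space sV"
  by (simp add: is_VOA_def)

lemma VOA_linear: "is_VOA sV Y vac om c \<Longrightarrow> Vector_Spaces.linear sV sV (Y u n)"
  by (simp add: is_VOA_def)

lemma VOA_truncation: "is_VOA sV Y vac om c \<Longrightarrow> \<exists>N. \<forall>n\<ge>N. Y u n v = 0"
  by (simp add: is_VOA_def)

lemma VOA_graded:
  "is_VOA sV Y vac om c \<Longrightarrow> \<exists>f. finite {k. f k \<noteq> 0} \<and> (\<forall>k. f k \<in> Vgr sV Y om k) \<and> v = Sum_any f"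
  by (simp add: is_VOA_def)

lemma VOA_grading_bounded_below: "is_VOA sV Y vac om c \<Longrightarrow> \<exists>N. \<forall>n<N. Vgr sV Y om n = {0}"
  by (simp add: is_VOA_def)

lemma VOA_L0_L1_commutator:
  assumes "is_VOA sV Y vac om c"
  shows "Lop Y om 0 (Lop Y om 1 v) - Lop Y om 1 (Lop Y om 0 v) = sV (- 1) (Lop Y om 1 v)"
proof -
  have "\<forall>m n v. Lop Y om m (Lop Y om n v) - Lop Y om n (Lop Y om m v)
      = sV (of_int (m - n)) (Lop Y om (m + n) v)
        + (if m + n = 0 then sV ((of_int m ^ 3 - of_int m) / 12 * c) v else 0)"
    using assms by (simp add: is_VOA_def)
  from this[rule_format, of 0 1 v] show ?thesis by simp
qed

lemma weak_module_vector_space: "is_weak_module sV Y vac sW YW \<Longrightarrow> vector_space sW"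
  by (simp add: is_weak_module_def)

lemma weak_module_linear_left: "is_weak_module sV Y vac sW YW \<Longrightarrow> Vector_Spaces.linear sV sW (\<lambda>u. YW u n w)"
  by (simp add: is_weak_module_def)

lemma weak_module_linear: "is_weak_module sV Y vac sW YW \<Longrightarrow> Vector_Spaces.linear sW sW (YW u n)"
  by (simp add: is_weak_module_def)

lemma weak_module_truncation: "is_weak_module sV Y vac sW YW \<Longrightarrow> \<exists>N. \<forall>n\<ge>N. YW u n w = 0"
  by (simp add: is_weak_module_def)

lemma weak_module_jacobi: "is_weak_module sV Y vac sW YW \<Longrightarrow> jacobi_identity sW Y YW"
  by (simp add: is_weak_module_def)

lemma eigenvectors_sum_eq_0:
  fixes sV :: "complex \<Rightarrow> 'v::ab_group_add \<Rightarrow> 'v"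
  assumes "vector_space sV" and L: "Vector_Spaces.linear sV sV L0"
  shows "finite S \<Longrightarrow> (\<forall>k\<in>S. L0 (h k) = sV (of_int k) (h k)) \<Longrightarrow> (\<Sum>k\<in>S. h k) = 0 \<Longrightarrow> \<forall>k\<in>S. h k = 0"
proof (induction S arbitrary: h rule: finite_induct)
  case (insert k0 S)
  interpret V: vector_space sV by fact
  define h' where "h' k = sV (of_int k - of_int k0) (h k)" for k
  have "L0 (\<Sum>k\<in>insert k0 S. h k) = (\<Sum>k\<in>insert k0 S. sV (of_int k) (h k))"
    unfolding linear_map_sum[OF L] by (rule sum.cong) (use insert.prems(1) in auto)
  then have "L0 (\<Sum>k\<in>insert k0 S. h k) - sV (of_int k0) (\<Sum>k\<in>insert k0 S. h k)
      = (\<Sum>k\<in>insert k0 S. sV (of_int k) (h k) - sV (of_int k0) (h k))"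
    unfolding V.scale_sum_right sum_subtractf by simp
  also have "\<dots> = (\<Sum>k\<in>insert k0 S. h' k)"
    by (simp add: h'_def V.scale_left_diff_distrib)
  also have "\<dots> = (\<Sum>k\<in>S. h' k)"
    using insert.hyps by (simp add: h'_def)
  finally have "(\<Sum>k\<in>S. h' k) = 0"
    using insert.prems(2) linear_map_0[OF L] by simp
  moreover have "\<forall>k\<in>S. L0 (h' k) = sV (of_int k) (h' k)"
    using insert.prems(1) by (simp add: h'_def linear_map_scale[OF L] V.scale_scale mult.commute)
  ultimately have "\<forall>k\<in>S. h' k = 0" using insert.IH by blast
  then have "\<forall>k\<in>S. h k = 0" using insert.hyps by (auto simp: h'_def V.scale_eq_0_iff)
  moreover have "h k0 = 0" using calculation insert.prems(2) insert.hyps by simp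
  ultimately show ?case by simp
qed simp

lemma graded_decomposition_unique:
  fixes sV :: "complex \<Rightarrow> 'v::ab_group_add \<Rightarrow> 'v"
  assumes "vector_space sV" and L: "Vector_Spaces.linear sV sV L0"
    and "finite {k. f k \<noteq> 0}" "finite {k. g k \<noteq> 0}"
    and f: "\<And>k. L0 (f k) = sV (of_int k) (f k)" and g: "\<And>k. L0 (g k) = sV (of_int k) (g k)"
    and "Sum_any f = Sum_any g"
  shows "f = g"
proof
  interpret V: vector_space sV by fact
  fix k
  define S where "S = {k. f k \<noteq> 0} \<union> {k. g k \<noteq> 0}"
  have "finite S" using assms(3,4) by (simp add: S_def)
  then have "(\<Sum>k\<in>S. f k - g k) = 0"
    using \<open>Sum_any f = Sum_any g\<close> Sum_any.expand_superset[of S f] Sum_any.expand_superset[of S g]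
    by (auto simp: S_def sum_subtractf)
  moreover have "L0 (f k - g k) = sV (of_int k) (f k - g k)" for k
    using f g by (simp add: linear_map_diff[OF L] V.scale_right_diff_distrib)
  ultimately have "\<forall>k\<in>S. f k - g k = 0"
    using eigenvectors_sum_eq_0[OF assms(1) L \<open>finite S\<close>, of "\<lambda>k. f k - g k"] by blast
  then have "f k - g k = 0" if "k \<in> S" using that by blast
  then show "f k = g k" by (cases "k \<in> S") (auto simp: S_def)
qed

lemma hproj_eq:
  fixes sV :: "complex \<Rightarrow> 'v::ab_group_add \<Rightarrow> 'v"
  assumes "vector_space sV" and "Vector_Spaces.linear sV sV (Lop Y om 0)"
    and "finite {k. f k \<noteq> 0}" and "\<And>k. f k \<in> Vgr sV Y om k" and "v = Sum_any f"
  shows "hproj sV Y om k v = f k"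
  unfolding hproj_def
proof (rule the_equality)
  fix c assume "\<exists>g. finite {k. g k \<noteq> 0} \<and> (\<forall>k. g k \<in> Vgr sV Y om k) \<and> v = Sum_any g \<and> c = g k"
  then obtain g where "finite {k. g k \<noteq> 0}" "\<And>k. g k \<in> Vgr sV Y om k" "v = Sum_any g" "c = g k"
    by blast
  with assms have "g = f"
    by (intro graded_decomposition_unique[of sV "Lop Y om 0"]) (auto simp: Vgr_def)
  then show "c = f k" using \<open>c = g k\<close> by simp
qed (use assms in blast)

lemma Lop_1_lowers_weight:
  assumes VOA: "is_VOA sV Y vac om c" and "v \<in> Vgr sV Y om k"
  shows "Lop Y om 1 v \<in> Vgr sV Y om (k - 1)"
proof -
  interpret V: vector_space sV by (rule VOA_vector_space[OF VOA])
  have L1: "Vector_Spaces.linear sV sV (Lop Y om 1)"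
    unfolding Lop_def by (rule VOA_linear[OF VOA])
  have "Lop Y om 0 (Lop Y om 1 v) = sV (of_int k) (Lop Y om 1 v) + sV (- 1) (Lop Y om 1 v)"
    using VOA_L0_L1_commutator[OF VOA, of v] \<open>v \<in> Vgr sV Y om k\<close>
    by (simp add: Vgr_def linear_map_scale[OF L1] algebra_simps)
  then show ?thesis
    by (simp add: Vgr_def V.scale_left_diff_distrib)
qed

lemma Lop_1_pow_lowers_weight:
  assumes "is_VOA sV Y vac om c" and "v \<in> Vgr sV Y om k"
  shows "(Lop Y om 1 ^^ j) v \<in> Vgr sV Y om (k - int j)"
proof (induction j)
  case (Suc j)
  then show ?case using Lop_1_lowers_weight[OF assms(1)] by (fastforce simp: algebra_simps)
qed (use assms(2) in simp)

lemma Lop_1_pow_hproj_finite_support: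
  assumes VOA: "is_VOA sV Y vac om c"
  shows "finite {(k, j). (Lop Y om 1 ^^ j) (hproj sV Y om k v) \<noteq> 0}"
proof -
  have L1: "Vector_Spaces.linear sV sV (Lop Y om 1)"
    unfolding Lop_def by (rule VOA_linear[OF VOA])
  obtain f where f: "finite {k. f k \<noteq> 0}" "\<And>k. f k \<in> Vgr sV Y om k" "v = Sum_any f"
    using VOA_graded[OF VOA] by blast
  obtain N0 where N0: "\<And>n. n < N0 \<Longrightarrow> Vgr sV Y om n = {0}"
    using VOA_grading_bounded_below[OF VOA] by blast
  have hproj: "hproj sV Y om k v = f k" for k
    using f by (intro hproj_eq[OF VOA_vector_space[OF VOA]]) (simp_all add: Lop_def VOA_linear[OF VOA])
  have "(Lop Y om 1 ^^ j) 0 = 0" for j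
    by (induction j) (simp_all add: linear_map_0[OF L1])
  moreover have "(Lop Y om 1 ^^ j) (f k) = 0" if "int j > k - N0" for k j
    using Lop_1_pow_lowers_weight[OF VOA f(2)[of k], of j] N0[of "k - int j"] that by simp
  ultimately have "{(k, j). (Lop Y om 1 ^^ j) (hproj sV Y om k v) \<noteq> 0}
      \<subseteq> (\<Union>k\<in>{k. f k \<noteq> 0}. {k} \<times> {..nat (k - N0)})"
    unfolding hproj by (force simp: not_less)
  moreover have "finite (\<Union>k\<in>{k. f k \<noteq> 0}. {k} \<times> {..nat (k - N0)})"
    using f(1) by auto
  ultimately show ?thesis by (rule finite_subset)
qed

lemma Yo_finite_sum:
  fixes sW :: "complex \<Rightarrow> 'w::ab_group_add \<Rightarrow> 'w"
  assumes VOA: "is_VOA sV Y vac om c" and WM: "is_weak_module sV Y vac sW YW"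
  obtains S :: "(int \<times> nat) set" and a b d where "finite S"
    "\<And>p w. Yo sV Y om sW YW v p w = (\<Sum>s\<in>S. sW (a s) (YW (b s) (p + d s) w))"
proof
  interpret W: vector_space sW by (rule weak_module_vector_space[OF WM])
  let ?S = "{(k, j). (Lop Y om 1 ^^ j) (hproj sV Y om k v) \<noteq> 0}"
  show "finite ?S" by (rule Lop_1_pow_hproj_finite_support[OF VOA])
  fix p w
  let ?t = "\<lambda>(k, j). sW ((- 1::complex) powi k / of_nat (fact j))
      (YW ((Lop Y om 1 ^^ j) (hproj sV Y om k v)) (p - int j + 2 * k - 1) w)"
  have "{s. ?t s \<noteq> 0} \<subseteq> ?S"
    using linear_map_0[OF weak_module_linear_left[OF WM]] by auto
  then have "Yo sV Y om sW YW v p w = (\<Sum>s\<in>?S. ?t s)"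
    unfolding Yo_def by (rule Sum_any.expand_superset[OF \<open>finite ?S\<close>])
  also have "\<dots> = (\<Sum>s\<in>?S. sW ((\<lambda>(k, j). (- 1::complex) powi k / of_nat (fact j)) s)
      (YW ((\<lambda>(k, j). (Lop Y om 1 ^^ j) (hproj sV Y om k v)) s) (p + (\<lambda>(k, j). 2 * k - int j - 1) s) w))"
    by (rule sum.cong) (auto simp: algebra_simps)
  finally show "Yo sV Y om sW YW v p w = \<dots>" .
qed

lemma Yo_vanishes_above:
  assumes VOA: "is_VOA sV Y vac om c" and WM: "is_weak_module sV Y vac sW YW"
  obtains P where "\<And>p. p > P \<Longrightarrow> Yo sV Y om sW YW v p w = 0"
proof -
  interpret W: vector_space sW by (rule weak_module_vector_space[OF WM])
  obtain S :: "(int \<times> nat) set" and a b d where "finite S"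
    and Yo: "\<And>p w. Yo sV Y om sW YW v p w = (\<Sum>s\<in>S. sW (a s) (YW (b s) (p + d s) w))"
    using Yo_finite_sum[OF VOA WM, where v = v] by blast
  have "\<forall>s\<in>S. eventually (\<lambda>p. YW (b s) (p + d s) w = 0) at_top"
  proof
    fix s
    obtain N where "\<forall>n\<ge>N. YW (b s) n w = 0" using weak_module_truncation[OF WM] by blast
    then show "eventually (\<lambda>p. YW (b s) (p + d s) w = 0) at_top"
      unfolding eventually_at_top_linorder by (intro exI[of _ "N - d s"]) simp
  qed
  then have "eventually (\<lambda>p. \<forall>s\<in>S. YW (b s) (p + d s) w = 0) at_top"
    by (rule eventually_ball_finite[OF \<open>finite S\<close>])
  then obtain N where "\<And>p s. p \<ge> N \<Longrightarrow> s \<in> S \<Longrightarrow> YW (b s) (p + d s) w = 0"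
    unfolding eventually_at_top_linorder by blast
  then show ?thesis by (intro that[of N]) (simp add: Yo)
qed

lemma Yo_zero:
  assumes "is_VOA sV Y vac om c" "is_weak_module sV Y vac sW YW"
  shows "Yo sV Y om sW YW v p 0 = 0"
proof -
  interpret W: vector_space sW by (rule weak_module_vector_space[OF assms(2)])
  obtain S :: "(int \<times> nat) set" and a b d where "finite S"
    and "\<And>p w. Yo sV Y om sW YW v p w = (\<Sum>s\<in>S. sW (a s) (YW (b s) (p + d s) w))"
    using Yo_finite_sum[OF assms, where v = v] by blast
  then show ?thesis
    by (simp add: linear_map_0[OF weak_module_linear[OF assms(2)]])
qed

lemma cross_diff_pow_double_sum:
  "(cross_diff ^^ K) (\<lambda>p q. \<Sum>t\<in>T. \<Sum>s\<in>S. c s t * H s t (p + e s) (q + f t)) p q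
    = (\<Sum>t\<in>T. \<Sum>s\<in>S. c s t * (cross_diff ^^ K) (H s t) (p + e s) (q + f t))"
proof -
  let ?b = "\<lambda>i. (- 1) ^ i * of_nat (K choose i) :: complex"
  have "(cross_diff ^^ K) (\<lambda>p q. \<Sum>t\<in>T. \<Sum>s\<in>S. c s t * H s t (p + e s) (q + f t)) p q
      = (\<Sum>i\<le>K. \<Sum>t\<in>T. \<Sum>s\<in>S. c s t * (?b i * H s t (p - int (K - i) + e s) (q - int i + f t)))"
    unfolding cross_diff_pow_eq by (simp add: sum_distrib_left mult.left_commute)
  also have "\<dots> = (\<Sum>t\<in>T. \<Sum>s\<in>S. \<Sum>i\<le>K. c s t * (?b i * H s t (p - int (K - i) + e s) (q - int i + f t)))"
    by (subst sum.swap) (rule sum.cong[OF refl], rule sum.swap)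
  also have "\<dots> = (\<Sum>t\<in>T. \<Sum>s\<in>S. c s t * (cross_diff ^^ K) (H s t) (p + e s) (q + f t))"
    unfolding cross_diff_pow_eq by (simp add: sum_distrib_left algebra_simps)
  finally show ?thesis .
qed

lemma linear_functional_nested_sums:
  assumes \<alpha>: "Vector_Spaces.linear sW (*) \<alpha>" and YW: "\<And>b n. Vector_Spaces.linear sW sW (YW b n)"
    and X: "\<And>p w. X p w = (\<Sum>s\<in>S. sW (a s) (YW (b s) (p + d s) w))"
    and X': "\<And>q w. X' q w = (\<Sum>t\<in>T. sW (a' t) (YW (b' t) (q + d' t) w))"
  shows "\<alpha> (X p (X' q w)) = (\<Sum>s\<in>S. \<Sum>t\<in>T. a s * a' t * \<alpha> (YW (b s) (p + d s) (YW (b' t) (q + d' t) w)))"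
  by (simp add: X X' linear_map_sum[OF YW] linear_map_scale[OF YW] linear_map_sum[OF \<alpha>]
      linear_map_scale[OF \<alpha>] sum_distrib_left mult.assoc)

lemma VOA_truncation_uniform:
  assumes "is_VOA sV Y vac om c" "finite S" "finite T"
  obtains K where "\<And>s t i. s \<in> S \<Longrightarrow> t \<in> T \<Longrightarrow> Y (f s) (int K + int i) (g t) = 0"
proof -
  have "\<forall>x\<in>S \<times> T. eventually (\<lambda>n. Y (f (fst x)) n (g (snd x)) = 0) at_top"
    using VOA_truncation[OF assms(1)] unfolding eventually_at_top_linorder by blast
  then have "eventually (\<lambda>n. \<forall>x\<in>S \<times> T. Y (f (fst x)) n (g (snd x)) = 0) at_top"
    by (rule eventually_ball_finite[OF finite_cartesian_product[OF assms(2,3)]])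
  then obtain N where "\<And>n s t. n \<ge> N \<Longrightarrow> s \<in> S \<Longrightarrow> t \<in> T \<Longrightarrow> Y (f s) n (g t) = 0"
    unfolding eventually_at_top_linorder by fastforce
  then show ?thesis by (intro that[of "nat N"]) simp
qed

lemma Yo_locality:
  fixes sW :: "complex \<Rightarrow> 'w::ab_group_add \<Rightarrow> 'w"
  assumes VOA: "is_VOA sV Y vac om c" and WM: "is_weak_module sV Y vac sW YW"
    and \<alpha>: "Vector_Spaces.linear sW (*) \<alpha>"
  obtains K where "(cross_diff ^^ K) (\<lambda>p q. \<alpha> (Yo sV Y om sW YW v q (Yo sV Y om sW YW u p w)))
      = (cross_diff ^^ K) (\<lambda>p q. \<alpha> (Yo sV Y om sW YW u p (Yo sV Y om sW YW v q w)))"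
proof -
  obtain Su :: "(int \<times> nat) set" and au bu du where "finite Su"
    and Yu: "\<And>p w. Yo sV Y om sW YW u p w = (\<Sum>s\<in>Su. sW (au s) (YW (bu s) (p + du s) w))"
    using Yo_finite_sum[OF VOA WM, where v = u] by blast
  obtain Sv :: "(int \<times> nat) set" and av bv dv where "finite Sv"
    and Yv: "\<And>q w. Yo sV Y om sW YW v q w = (\<Sum>t\<in>Sv. sW (av t) (YW (bv t) (q + dv t) w))"
    using Yo_finite_sum[OF VOA WM, where v = v] by blast
  obtain K where K: "\<And>s t i. s \<in> Su \<Longrightarrow> t \<in> Sv \<Longrightarrow> Y (bu s) (int K + int i) (bv t) = 0"
    using VOA_truncation_uniform[OF VOA \<open>finite Su\<close> \<open>finite Sv\<close>] by blast
  define F where "F s t p q = \<alpha> (YW (bu s) p (YW (bv t) q w))" for s t p q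
  define G where "G s t p q = \<alpha> (YW (bv t) q (YW (bu s) p w))" for s t p q
  note nested_sums = linear_functional_nested_sums[OF \<alpha> weak_module_linear[OF WM]]
  have "\<alpha> (Yo sV Y om sW YW v q (Yo sV Y om sW YW u p w))
      = (\<Sum>t\<in>Sv. \<Sum>s\<in>Su. av t * au s * G s t (p + du s) (q + dv t))" for p q
    unfolding nested_sums[OF Yv Yu] G_def ..
  moreover have "\<alpha> (Yo sV Y om sW YW u p (Yo sV Y om sW YW v q w))
      = (\<Sum>t\<in>Sv. \<Sum>s\<in>Su. av t * au s * F s t (p + du s) (q + dv t))" for p q
    unfolding nested_sums[OF Yu Yv] F_def by (subst sum.swap) (simp add: mult.commute)
  moreover have "(cross_diff ^^ K) (G s t) = (cross_diff ^^ K) (F s t)" if "s \<in> Su" "t \<in> Sv" for s t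
    unfolding F_def G_def
    by (rule sym, rule jacobi_mode_locality[OF weak_module_vector_space[OF WM] weak_module_linear_left[OF WM]
        weak_module_jacobi[OF WM] \<alpha> K[OF that]])
  ultimately have "(cross_diff ^^ K) (\<lambda>p q. \<alpha> (Yo sV Y om sW YW v q (Yo sV Y om sW YW u p w))) p q
      = (cross_diff ^^ K) (\<lambda>p q. \<alpha> (Yo sV Y om sW YW u p (Yo sV Y om sW YW v q w))) p q" for p q
    using cross_diff_pow_double_sum[where c = "\<lambda>s t. av t * au s" and H = G and e = du and f = dv]
      cross_diff_pow_double_sum[where c = "\<lambda>s t. av t * au s" and H = F and e = du and f = dv]
    by (simp cong: sum.cong)
  then show ?thesis using that by blast
qed

lemma DPz_rational_series:
  assumes VOA: "is_VOA sV Y vac om c" and WM: "is_weak_module sV Y vac sW YW"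
    and "z \<noteq> 0" and \<alpha>: "\<alpha> \<in> DPz sV Y om sW YW z"
  obtains M N where "\<And>w. rational_series z M N (\<lambda>p. \<alpha> (Yo sV Y om sW YW v p w))"
proof -
  obtain M N where sums: "\<forall>w. \<exists>P :: complex poly. \<forall>x. norm z < norm x \<longrightarrow>
      ((\<lambda>p. \<alpha> (Yo sV Y om sW YW v p w) * x powi p) has_sum (poly P x / (x ^ M * (x - z) ^ N))) UNIV"
    using \<alpha> unfolding DPz_def by blast
  have "rational_series z M N (\<lambda>p. \<alpha> (Yo sV Y om sW YW v p w))" for w
  proof -
    obtain P :: "complex poly" where P: "\<And>x. norm z < norm x \<Longrightarrow>
        ((\<lambda>p. \<alpha> (Yo sV Y om sW YW v p w) * x powi p) has_sum (poly P x / (x ^ M * (x - z) ^ N))) UNIV"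
      using sums by blast
    obtain P0 where "\<And>p. p > P0 \<Longrightarrow> Yo sV Y om sW YW v p w = 0"
      using Yo_vanishes_above[OF VOA WM] by blast
    then have "truncated_above (\<lambda>p. \<alpha> (Yo sV Y om sW YW v p w))"
      using \<alpha> linear_map_0 unfolding truncated_above_def DPz_def by fastforce
    moreover from this P have "mult_denom z M N (\<lambda>p. \<alpha> (Yo sV Y om sW YW v p w)) = poly_coeffs P"
      by (rule mult_denom_eq_poly_coeffs)
    ultimately show ?thesis by (simp add: rational_series_def poly_coeffs_def)
  qed
  then show ?thesis by (rule that)
qed

theorem proposition3p24:
  fixes sV :: "complex \<Rightarrow> 'v::ab_group_add \<Rightarrow> 'v"
    and Y :: "'v \<Rightarrow> int \<Rightarrow> 'v \<Rightarrow> 'v"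
    and vac om :: 'v and c :: complex
    and sW :: "complex \<Rightarrow> 'w::ab_group_add \<Rightarrow> 'w"
    and YW :: "'v \<Rightarrow> int \<Rightarrow> 'w \<Rightarrow> 'w"
    and z :: complex and \<alpha> :: "'w \<Rightarrow> complex"
    and u v :: 'v and m n :: int
  assumes "is_VOA sV Y vac om c"
    and "is_weak_module sV Y vac sW YW"
    and "z \<noteq> 0"
    and "\<alpha> \<in> DPz sV Y om sW YW z"
  shows "YL sV Y om sW YW z u m (YR sV Y om sW YW z v n \<alpha>)
       = YR sV Y om sW YW z v n (YL sV Y om sW YW z u m \<alpha>)"
proof
  fix w
  note VOA = assms(1) and WM = assms(2) and z = assms(3)
  let ?Yo = "Yo sV Y om sW YW"
  have \<alpha>: "Vector_Spaces.linear sW (*) \<alpha>" using assms(4) unfolding DPz_def by blast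
  obtain Mv Nv where rows: "\<And>w. rational_series z Mv Nv (\<lambda>q. \<alpha> (?Yo v q w))"
    using DPz_rational_series[OF VOA WM z assms(4)] by blast
  obtain Mu Nu where columns: "\<And>w. rational_series z Mu Nu (\<lambda>p. \<alpha> (?Yo u p w))"
    using DPz_rational_series[OF VOA WM z assms(4)] by blast
  obtain P where P: "\<And>p. p > P \<Longrightarrow> ?Yo u p w = 0"
    using Yo_vanishes_above[OF VOA WM] by blast
  obtain Q where Q: "\<And>q. q > Q \<Longrightarrow> ?Yo v q w = 0"
    using Yo_vanishes_above[OF VOA WM] by blast
  obtain K where "(cross_diff ^^ K) (\<lambda>p q. \<alpha> (?Yo v q (?Yo u p w)))
      = (cross_diff ^^ K) (\<lambda>p q. \<alpha> (?Yo u p (?Yo v q w)))"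
    using Yo_locality[OF VOA WM \<alpha>] by blast
  then have "expL z (\<lambda>p. expR z (\<lambda>q. \<alpha> (?Yo v q (?Yo u p w))) n) m
      = expR z (\<lambda>q. expL z (\<lambda>p. \<alpha> (?Yo u p (?Yo v q w))) m) n"
    using P Q Yo_zero[OF VOA WM] linear_map_0[OF \<alpha>]
    by (intro expL_expR_commute[OF z rows _ columns, where P = P and Q = Q]) auto
  then show "YL sV Y om sW YW z u m (YR sV Y om sW YW z v n \<alpha>) w
      = YR sV Y om sW YW z v n (YL sV Y om sW YW z u m \<alpha>) w"
    by (simp add: YL_def YR_def)
qed

end
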